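(* Under the hypotheses of the decomposability theorem for sums (so $S_{(0)}=S_{(1)}+S_{(2)}$ is spectrally decomposable over $S_{(1)}$ with $\kappa=1$ and length $\ell$), one has $A_{0,1}(s)=0$ and $$A_{0,0}(s)=\sum_{n_1=1}^\infty\Big(-\log\Gamma(\lambda_{(1),n_1},S_{(2)})+\sum_{j=0}^{p_{(2)}}a_{(2),j,1}\lambda_{(1),n_1}^j\log\lambda_{(1),n_1}+\sum_{h=0}^\ell a_{(2),\alpha_{(2),h},0}\lambda_{(1),n_1}^{\alpha_{(2),h}}\Big)\lambda_{(1),n_1}^{-s}.$$
   Context: Gamma function of a sequence $S=\{\lambda_n\}$ of genus $\mathsf g(S)$: $\frac1{\Gamma(z,S)}=\prod_n(1+\frac z{\lambda_n})\exp(\sum_{j=1}^{\mathsf g(S)}\frac{(-1)^j}{j}\frac{z^j}{\lambda_n^j})$; $\log(-\lambda)$ is real on the negative real axis. Let $S_{(1)}$ (positive reals) and $S_{(2)}$ be totally regular sequences of spectral type with exponents $s_{(i)}$, genera $p_{(i)}$, orders $\alpha_{(i),N_{(i)}}\le0$, $\alpha_{(1),N_{(1)}}<-p_{(2)}-1$, $-\alpha_{(2),N_{(2)}}\ge s_{(1)}$, with $\log\Gamma(-\lambda,S_{(2)})=\sum_{h}a_{(2),\alpha_{(2),h},0}(-\lambda)^{\alpha_{(2),h}}+\sum_{j=0}^{p_{(2)}}a_{(2),j,1}(-\lambda)^j\log(-\lambda)+o(\cdot)$ as $\lambda\to\infty$ (totally regular: log terms only at integer $j\in[0,p_{(2)}]$).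 Let $\ell$ be the largest integer with $-\alpha_{(2),\ell}\le s_{(1)}$. For $\tilde S_{n_1}=\lambda_{(1),n_1}^{-1}\{\lambda_{(1),n_1}+\lambda_{(2),n_2}\}_{n_2}$ one has, as $n_1\to\infty$ uniformly in $\lambda$, $\log\Gamma(-\lambda,\tilde S_{n_1})=\sum_{h=0}^{\ell}\tilde\phi_{h}(\lambda)\lambda_{(1),n_1}^{\alpha_{(2),h}}+\sum_{l=0}^{p_{(2)}}\hat\phi_{l}(\lambda)\lambda_{(1),n_1}^{l}+\sum_{l=0}^{p_{(2)}}P_l(\lambda)\lambda_{(1),n_1}^l\log\lambda_{(1),n_1}+o(\lambda_{(1),n_1}^{-s_{(1)}})$ with $\tilde\phi_h(\lambda)=a_{(2),\alpha_{(2),h},0}((1-\lambda)^{\alpha_{(2),h}}-1)-\sum_{k=1}^{p_{(0)}}K_{k,h,0}(-\lambda)^k$, $\hat\phi_l(\lambda)=a_{(2),l,1}(1-\lambda)^l\log(1-\lambda)-\sum_{k=1}^{p_{(0)}}K_{k,l,2}(-\lambda)^k$, $P_l$ polynomials vanishing at $0$, $K$'s constants, $p_{(0)}=[s_{(1)}+s_{(2)}]$; these $\tilde\phi_h,\hat\phi_l$ are the functions $\phi_\sigma$ of the decomposition (with $\sigma=-\alpha_{(2),h}$, resp. $\sigma=-l$). Writing $a_{0,k,n_1}$ for the coefficient of $(-\lambda)^0\log^k(-\lambda)$ in the large-$\lambda$ expansion of $\log\Gamma(-\lambda,\tilde S_{n_1})$ and $b_{\sigma,0,k}$ for that of $(-\lambda)^0\log^k(-\lambda)$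 in the large-$\lambda$ expansion of $\phi_\sigma$, define $A_{0,k}(s)=\sum_{n_1\ge1}\big(a_{0,k,n_1}-\sum_\sigma b_{\sigma,0,k}\lambda_{(1),n_1}^{-\sigma}\big)\lambda_{(1),n_1}^{-s}$, $k=0,1$, the sum over $\sigma$ running over all the functions $\phi_\sigma$ above. *)

theory Defs
  imports "HOL-Analysis.Analysis" "HOL-Library.Landau_Symbols"
begin

definition sector :: "real \<Rightarrow> real \<Rightarrow> complex set" where
  "sector c \<theta> = {z. z = complex_of_real c \<or> \<bar>Arg (z - complex_of_real c)\<bar> \<le> \<theta> / 2}"

definition outside_sector :: "real \<Rightarrow> real \<Rightarrow> complex filter" where
  "outside_sector c \<theta> = inf at_infinity (principal (- sector c \<theta>))"

definition exponent_conv :: "(nat \<Rightarrow> complex) \<Rightarrow> real" where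
  "exponent_conv S = Inf {s. summable (\<lambda>n. norm (S n) powr (- s))}"

definition genus :: "(nat \<Rightarrow> complex) \<Rightarrow> nat" where
  "genus S = (LEAST p. summable (\<lambda>n. 1 / norm (S n) ^ (p + 1)))"

definition logGamma_seq :: "(nat \<Rightarrow> complex) \<Rightarrow> complex \<Rightarrow> complex" where
  "logGamma_seq S z =
     - (\<Sum>n. ln (1 + z / S n)
            + (\<Sum>j=1..genus S. (-1) ^ j / of_nat j * (z / S n) ^ j))"

definition totally_regular_spectral ::
  "(nat \<Rightarrow> complex) \<Rightarrow> real \<Rightarrow> nat \<Rightarrow> (nat \<Rightarrow> real) \<Rightarrow> nat \<Rightarrow> (real \<Rightarrow> nat \<Rightarrow> complex) \<Rightarrow> bool"
where
  "totally_regular_spectral S s p \<alpha> N a \<longleftrightarrow>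
     (\<forall>n. S n \<noteq> 0) \<and>
     (\<exists>s'. summable (\<lambda>n. norm (S n) powr (- s'))) \<and>
     s = exponent_conv S \<and> p = genus S \<and>
     (\<forall>h<N. \<alpha> (Suc h) < \<alpha> h) \<and>
     (\<exists>c \<theta>. 0 < c \<and> 0 < \<theta> \<and> \<theta> < pi \<and> range S \<subseteq> sector c \<theta> \<and>
        (\<lambda>x. logGamma_seq S (- x)
              - (\<Sum>h\<le>N. a (\<alpha> h) 0 * (- x) powr complex_of_real (\<alpha> h))
              - (\<Sum>j\<le>p. a (real j) 1 * (- x) ^ j * ln (- x)))
        \<in> o[outside_sector c \<theta>](\<lambda>x. (- x) powr complex_of_real (\<alpha> N)))"

text \<open>Coefficient of (-lambda)^0 log^k(-lambda) in the large-lambda expansion of f,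
  the expansion being taken along lambda \<rightarrow> -\<infinity> (i.e. -lambda \<rightarrow> +\<infinity>) up to o(1).
  The terms with nonnegative exponent are uniquely determined there.\<close>
definition const_coeff :: "(complex \<Rightarrow> complex) \<Rightarrow> nat \<Rightarrow> complex" where
  "const_coeff f k = (THE v. \<exists>c :: real \<Rightarrow> nat \<Rightarrow> complex.
      finite {(\<beta>, j). c \<beta> j \<noteq> 0} \<and> v = c 0 k \<and>
      ((\<lambda>x. f x - (\<Sum>(\<beta>, j)\<in>{(\<beta>, j). c \<beta> j \<noteq> 0}.
                       c \<beta> j * (- x) powr complex_of_real \<beta> * ln (- x) ^ j))
        \<longlongrightarrow> 0) (filtermap (\<lambda>t. - complex_of_real t) at_top))"

end

theory Submission
  imports Defs "HOL-Real_Asymp.Real_Asymp"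
begin

text \<open>Fix \<open>n\<^sub>1\<close>, write \<open>\<sigma>\<close> for \<open>\<lambda>\<^sub>(\<^sub>1\<^sub>),\<^sub>n\<^sub>1\<close> and \<open>S\<close> for \<open>S\<^sub>(\<^sub>2\<^sub>)\<close>. The shifted sequence
  \<open>(\<sigma> + S) / \<sigma>\<close> has the same genus as \<open>S\<close>, and comparing the Weierstrass factors gives
  \<open>log \<Gamma>(-\<lambda>, (\<sigma> + S) / \<sigma>) = log \<Gamma>(\<sigma> (1 - \<lambda>), S) - log \<Gamma>(\<sigma>, S) - P(\<lambda>)\<close>
  for a polynomial \<open>P\<close> with \<open>P(0) = 0\<close>: each factor contributes a polynomial of degree at most
  the genus, and a series of such polynomials that converges at \<open>genus + 1\<close> points sums to a
  polynomial. Inserting the large-argument expansion of \<open>log \<Gamma>(\<mu>, S)\<close> at \<open>\<mu> = \<sigma> (1 - \<lambda>)\<close> and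
  writing \<open>a \<mu>\<^sup>\<alpha>\<close> and \<open>a \<mu>\<^sup>j log \<mu>\<close> in terms of tilde-\<open>\<phi>\<close> and hat-\<open>\<phi>\<close>, the coefficient of
  \<open>(-\<lambda>)\<^sup>0 log\<^sup>k(-\<lambda>)\<close> is read off summand by summand; this is legitimate because such
  coefficients are unique, a monomial \<open>t\<^sup>b log\<^sup>j t\<close> with \<open>b \<ge> 0\<close> dominating all
  lexicographically smaller ones. Polynomials without constant term contribute nothing. For \<open>k = 1\<close> everything cancels against the \<open>\<phi>\<close>'s; for \<open>k = 0\<close>
  the summand \<open>- log \<Gamma>(\<sigma>, S) + \<Sum> a\<^sub>j\<^sub>,\<^sub>1 \<sigma>\<^sup>j log \<sigma> + \<Sum>\<^sub>h\<^sub>\<le>\<^sub>\<ell> a\<^sub>\<alpha>\<^sub>h\<^sub>,\<^sub>0 \<sigma>\<^sup>\<alpha>\<^sup>h\<close> remains,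
  since for \<open>h > \<ell>\<close> the exponent \<open>\<alpha>\<^sub>h < -s\<^sub>(\<^sub>1\<^sub>) \<le> 0\<close> makes the constant term of tilde-\<open>\<phi>\<^sub>h\<close>
  equal to \<open>-a\<^sub>\<alpha>\<^sub>h\<^sub>,\<^sub>0\<close>. So the Dirichlet series agree termwise.\<close>

section \<open>Expansions in powers and logarithms at infinity\<close>

definition expansion_support :: "(real \<Rightarrow> nat \<Rightarrow> complex) \<Rightarrow> (real \<times> nat) set" where
  "expansion_support c = {(b, j). c b j \<noteq> 0}"

definition pow_ln :: "real \<Rightarrow> nat \<Rightarrow> real \<Rightarrow> complex" where
  "pow_ln b j t = complex_of_real (t powr b * ln t ^ j)"

text \<open>For \<open>g t = f (- t)\<close> this is the expansion of \<open>f\<close> that \<^const>\<open>const_coeff\<close> refers to.\<close>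
definition has_expansion :: "(real \<Rightarrow> complex) \<Rightarrow> (real \<Rightarrow> nat \<Rightarrow> complex) \<Rightarrow> bool" where
  "has_expansion g c \<longleftrightarrow> finite (expansion_support c) \<and>
     ((\<lambda>t. g t - (\<Sum>(b, j)\<in>expansion_support c. c b j * pow_ln b j t)) \<longlongrightarrow> 0) at_top"

lemma has_expansion_iff_superset:
  assumes "finite U" "expansion_support c \<subseteq> U"
  shows "has_expansion g c \<longleftrightarrow> ((\<lambda>t. g t - (\<Sum>(b, j)\<in>U. c b j * pow_ln b j t)) \<longlongrightarrow> 0) at_top"
proof -
  have "(\<Sum>(b, j)\<in>expansion_support c. c b j * pow_ln b j t) = (\<Sum>(b, j)\<in>U. c b j * pow_ln b j t)" for t
    using assms by (intro sum.mono_neutral_left) (auto simp: expansion_support_def)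
  then show ?thesis
    using assms finite_subset unfolding has_expansion_def by auto
qed

lemma has_expansion_add:
  assumes "has_expansion f c" "has_expansion g d"
  shows "has_expansion (\<lambda>t. f t + g t) (\<lambda>b j. c b j + d b j)"
proof -
  let ?U = "expansion_support c \<union> expansion_support d"
  have U: "finite ?U" using assms unfolding has_expansion_def by auto
  have sub: "expansion_support c \<subseteq> ?U" "expansion_support d \<subseteq> ?U"
    "expansion_support (\<lambda>b j. c b j + d b j) \<subseteq> ?U"
    by (auto simp: expansion_support_def)
  have "((\<lambda>t. (f t - (\<Sum>(b, j)\<in>?U. c b j * pow_ln b j t))
           + (g t - (\<Sum>(b, j)\<in>?U. d b j * pow_ln b j t))) \<longlongrightarrow> 0 + 0) at_top"
    using assms has_expansion_iff_superset[OF U sub(1)] has_expansion_iff_superset[OF U sub(2)]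
    by (intro tendsto_add) auto
  then show ?thesis
    unfolding has_expansion_iff_superset[OF U sub(3)]
    by (simp add: sum.distrib distrib_right case_prod_unfold algebra_simps)
qed

lemma has_expansion_scale:
  assumes "has_expansion f c"
  shows "has_expansion (\<lambda>t. a * f t) (\<lambda>b j. a * c b j)"
proof -
  have U: "finite (expansion_support c)" using assms unfolding has_expansion_def by auto
  have sub: "expansion_support (\<lambda>b j. a * c b j) \<subseteq> expansion_support c"
    by (auto simp: expansion_support_def)
  have "((\<lambda>t. a * (f t - (\<Sum>(b, j)\<in>expansion_support c. c b j * pow_ln b j t))) \<longlongrightarrow> a * 0) at_top"
    using assms unfolding has_expansion_def by (intro tendsto_mult) auto
  then show ?thesis
    unfolding has_expansion_iff_superset[OF U sub]
    by (simp add: sum_distrib_left right_diff_distrib case_prod_unfold mult.assoc)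
qed

lemma has_expansion_tendsto_zero: "(f \<longlongrightarrow> 0) at_top \<Longrightarrow> has_expansion f (\<lambda>b j. 0)"
  unfolding has_expansion_def expansion_support_def by simp

lemma has_expansion_sum:
  assumes "finite I" "\<And>i. i \<in> I \<Longrightarrow> has_expansion (f i) (c i)"
  shows "has_expansion (\<lambda>t. \<Sum>i\<in>I. f i t) (\<lambda>b j. \<Sum>i\<in>I. c i b j)"
  using assms
proof (induction I rule: finite_induct)
  case empty
  then show ?case using has_expansion_tendsto_zero[of "\<lambda>t. 0"] by simp
next
  case (insert x F)
  then show ?case
    using has_expansion_add[of "f x" "c x" "\<lambda>t. \<Sum>i\<in>F. f i t" "\<lambda>b j. \<Sum>i\<in>F. c i b j"] by simp
qed

lemma has_expansion_pow_ln: "has_expansion (pow_ln b0 j0) (\<lambda>b j. if b = b0 \<and> j = j0 then 1 else 0)"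
proof -
  have "expansion_support (\<lambda>b j. if b = b0 \<and> j = j0 then 1 else 0) = {(b0, j0)}"
    by (auto simp: expansion_support_def)
  then show ?thesis unfolding has_expansion_def by simp
qed

lemma has_expansion_eventually_eq:
  assumes "has_expansion f c" "eventually (\<lambda>t. f t = g t) at_top"
  shows "has_expansion g c"
  using assms(1) unfolding has_expansion_def
  by (auto elim!: Lim_transform_eventually intro: eventually_mono[OF assms(2)])

lemma finite_pairs_lex_max:
  fixes V :: "(real \<times> nat) set"
  assumes "finite V" "V \<noteq> {}"
  obtains bm jm where "(bm, jm) \<in> V" "\<And>b j. (b, j) \<in> V \<Longrightarrow> b < bm \<or> (b = bm \<and> j \<le> jm)"
proof -
  define bm where "bm = Max (fst ` V)"
  define W where "W = {p \<in> V. fst p = bm}"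
  define jm where "jm = Max (snd ` W)"
  have "bm \<in> fst ` V" unfolding bm_def using assms by (intro Max_in) auto
  then have "W \<noteq> {}" unfolding W_def by auto
  moreover have "finite W" using assms unfolding W_def by simp
  ultimately have "jm \<in> snd ` W" unfolding jm_def by (intro Max_in) auto
  then have "(bm, jm) \<in> V" unfolding W_def by auto
  moreover have "b < bm \<or> (b = bm \<and> j \<le> jm)" if "(b, j) \<in> V" for b j
  proof -
    have "b \<le> bm" unfolding bm_def using assms that by (intro Max_ge) force+
    moreover have "b = bm \<Longrightarrow> j \<le> jm"
      unfolding jm_def using \<open>finite W\<close> that by (intro Max_ge) (force simp: W_def)+
    ultimately show ?thesis by linarith
  qed
  ultimately show ?thesis using that by blast
qed

lemma pow_ln_ratio_tendsto_zero:
  assumes "b < bm \<or> (b = bm \<and> j < jm)"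
  shows "((\<lambda>t::real. t powr b * ln t ^ j / (t powr bm * ln t ^ jm)) \<longlongrightarrow> 0) at_top"
  using assms
proof
  assume "b < bm"
  then have "((\<lambda>t::real. t powr (- (bm - b)) * ln t ^ j / ln t ^ jm) \<longlongrightarrow> 0) at_top"
    by real_asymp
  then show ?thesis
    by (rule Lim_transform_eventually)
       (use eventually_gt_at_top[of 0] in \<open>eventually_elim, simp add: powr_diff powr_minus field_simps\<close>)
next
  assume *: "b = bm \<and> j < jm"
  have "((\<lambda>t::real. 1 / ln t ^ (jm - j)) \<longlongrightarrow> 0) at_top"
    using * by real_asymp
  then show ?thesis
  proof (rule Lim_transform_eventually)
    show "eventually (\<lambda>t. 1 / ln t ^ (jm - j) = t powr b * ln t ^ j / (t powr bm * ln t ^ jm)) at_top"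
      using eventually_gt_at_top[of 1]
    proof eventually_elim
      case (elim t)
      have "ln t ^ jm = ln t ^ j * ln t ^ (jm - j)"
        using * by (simp flip: power_add)
      then show ?case using * elim by simp
    qed
  qed
qed

lemma pow_ln_sum_div_leading_tendsto:
  assumes U: "finite U" and m: "(bm, jm) \<in> U"
    and lower: "\<And>b j. (b, j) \<in> U \<Longrightarrow> (b, j) \<noteq> (bm, jm) \<Longrightarrow> e b j \<noteq> 0 \<Longrightarrow>
      b < bm \<or> (b = bm \<and> j < jm)"
  shows "((\<lambda>t. (\<Sum>(b, j)\<in>U. e b j * pow_ln b j t) / complex_of_real (t powr bm * ln t ^ jm))
    \<longlongrightarrow> e bm jm) at_top"
proof -
  define r where "r b j t = t powr b * ln t ^ j / (t powr bm * ln t ^ jm)" for b j t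
  have term_lim: "((\<lambda>t. e b j * complex_of_real (r b j t)) \<longlongrightarrow>
      (if (b, j) = (bm, jm) then e bm jm else 0)) at_top" if bj: "(b, j) \<in> U" for b j
  proof -
    consider "(b, j) = (bm, jm)" | "(b, j) \<noteq> (bm, jm)" "e b j = 0" | "(b, j) \<noteq> (bm, jm)" "e b j \<noteq> 0"
      by blast
    then show ?thesis
    proof cases
      case 1
      have "eventually (\<lambda>t. e bm jm = e b j * complex_of_real (r b j t)) at_top"
        using eventually_gt_at_top[of 1] by eventually_elim (use 1 in \<open>simp add: r_def\<close>)
      with 1 show ?thesis by (auto intro: Lim_transform_eventually)
    next
      case 3
      then have "((\<lambda>t. e b j * complex_of_real (r b j t)) \<longlongrightarrow> e b j * complex_of_real 0) at_top"
        unfolding r_def using lower[OF bj]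
        by (intro tendsto_mult tendsto_of_real pow_ln_ratio_tendsto_zero tendsto_const) auto
      with 3 show ?thesis by (simp del: prod.inject)
    qed (simp del: prod.inject)
  qed
  have "((\<lambda>t. \<Sum>(b, j)\<in>U. e b j * complex_of_real (r b j t)) \<longlongrightarrow>
      (\<Sum>(b, j)\<in>U. if (b, j) = (bm, jm) then e bm jm else 0)) at_top"
    using term_lim by (intro tendsto_sum) auto
  moreover have "(\<Sum>(b, j)\<in>U. if (b, j) = (bm, jm) then e bm jm else 0)
      = (\<Sum>p\<in>U. if p = (bm, jm) then e bm jm else 0)"
    by (intro sum.cong refl) (auto split: prod.splits)
  moreover have "eventually (\<lambda>t. (\<Sum>(b, j)\<in>U. e b j * complex_of_real (r b j t))
      = (\<Sum>(b, j)\<in>U. e b j * pow_ln b j t) / complex_of_real (t powr bm * ln t ^ jm)) at_top"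
    using eventually_gt_at_top[of 1]
    by eventually_elim (simp add: r_def pow_ln_def sum_divide_distrib case_prod_unfold)
  ultimately show ?thesis using U m by (auto intro: Lim_transform_eventually)
qed

text \<open>The lexicographically largest monomial dominates all others; if it had a nonnegative
  exponent, the sum could not tend to \<open>0\<close>.\<close>
lemma pow_ln_sum_tendsto_zero_imp_coeff_eq_zero:
  assumes U: "finite U" and lim: "((\<lambda>t. \<Sum>(b, j)\<in>U. e b j * pow_ln b j t) \<longlongrightarrow> 0) at_top"
    and mem: "(b0, j0) \<in> U" and b0: "0 \<le> b0"
  shows "e b0 j0 = 0"
proof (rule ccontr)
  assume "e b0 j0 \<noteq> 0"
  define V where "V = {(b, j) \<in> U. e b j \<noteq> 0}"
  have "finite V" using U by (rule rev_finite_subset) (auto simp: V_def)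
  moreover have "(b0, j0) \<in> V" using mem \<open>e b0 j0 \<noteq> 0\<close> unfolding V_def by auto
  ultimately obtain bm jm where m: "(bm, jm) \<in> V"
    and lex: "\<And>b j. (b, j) \<in> V \<Longrightarrow> b < bm \<or> (b = bm \<and> j \<le> jm)"
    using finite_pairs_lex_max by blast
  have "b0 \<le> bm" using lex[OF \<open>(b0, j0) \<in> V\<close>] by auto
  have lead: "((\<lambda>t. (\<Sum>(b, j)\<in>U. e b j * pow_ln b j t) / complex_of_real (t powr bm * ln t ^ jm))
      \<longlongrightarrow> e bm jm) at_top"
    using U m lex unfolding V_def by (intro pow_ln_sum_div_leading_tendsto) force+
  have "((\<lambda>t. (\<Sum>(b, j)\<in>U. e b j * pow_ln b j t) / complex_of_real (t powr bm * ln t ^ jm))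
      \<longlongrightarrow> 0) at_top"
  proof (rule Lim_null_comparison)
    show "eventually (\<lambda>t. norm ((\<Sum>(b, j)\<in>U. e b j * pow_ln b j t) / complex_of_real (t powr bm * ln t ^ jm))
        \<le> norm (\<Sum>(b, j)\<in>U. e b j * pow_ln b j t)) at_top"
      using eventually_ge_at_top[of "exp 1"]
    proof eventually_elim
      case (elim t)
      have "1 < t" using elim exp_gt_one[OF zero_less_one] by linarith
      moreover have "1 \<le> ln t" using elim ln_ge_iff[of t 1] \<open>1 < t\<close> by simp
      moreover have "1 \<le> t powr bm" using \<open>1 < t\<close> \<open>b0 \<le> bm\<close> b0 by (intro ge_one_powr_ge_zero) auto
      ultimately have "1 \<le> t powr bm * ln t ^ jm"
        using mult_mono[of 1 "t powr bm" 1 "ln t ^ jm"] one_le_power[of "ln t" jm] by simp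
      then show ?case
        unfolding norm_divide norm_of_real by (simp add: divide_le_eq mult_le_cancel_left1)
    qed
  qed (use lim in \<open>rule tendsto_norm_zero\<close>)
  then have "e bm jm = 0" using tendsto_unique[OF _ lead] by simp
  then show False using m unfolding V_def by simp
qed

lemma has_expansion_unique:
  assumes "has_expansion g c" "has_expansion g d" "0 \<le> b"
  shows "c b k = d b k"
proof -
  let ?U = "expansion_support c \<union> expansion_support d"
  have U: "finite ?U" using assms unfolding has_expansion_def by auto
  have sub: "expansion_support c \<subseteq> ?U" "expansion_support d \<subseteq> ?U" by auto
  have "((\<lambda>t. (g t - (\<Sum>(b, j)\<in>?U. c b j * pow_ln b j t)) - (g t - (\<Sum>(b, j)\<in>?U. d b j * pow_ln b j t)))
      \<longlongrightarrow> 0 - 0) at_top"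
    using assms has_expansion_iff_superset[OF U sub(1)] has_expansion_iff_superset[OF U sub(2)]
    by (intro tendsto_diff) auto
  then have "((\<lambda>t. \<Sum>(b, j)\<in>?U. (d b j - c b j) * pow_ln b j t) \<longlongrightarrow> 0) at_top"
    by (simp add: sum_subtractf left_diff_distrib case_prod_unfold)
  then show ?thesis
    using pow_ln_sum_tendsto_zero_imp_coeff_eq_zero[OF U, of "\<lambda>b j. d b j - c b j" b k] assms(3)
    by (cases "(b, k) \<in> ?U") (auto simp: expansion_support_def)
qed

lemma const_coeff_eq:
  assumes "has_expansion (\<lambda>t. f (- complex_of_real t)) c"
  shows "const_coeff f k = c 0 k"
proof -
  have expansion_iff: "finite {(\<beta>, j). d \<beta> j \<noteq> 0} \<and>
      ((\<lambda>x. f x - (\<Sum>(\<beta>, j)\<in>{(\<beta>, j). d \<beta> j \<noteq> 0}. d \<beta> j * (- x) powr complex_of_real \<beta> * ln (- x) ^ j))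
        \<longlongrightarrow> 0) (filtermap (\<lambda>t. - complex_of_real t) at_top)
      \<longleftrightarrow> has_expansion (\<lambda>t. f (- complex_of_real t)) d" for d :: "real \<Rightarrow> nat \<Rightarrow> complex"
  proof -
    have "eventually (\<lambda>t. f (- complex_of_real t) - (\<Sum>(\<beta>, j)\<in>{(\<beta>, j). d \<beta> j \<noteq> 0}.
          d \<beta> j * (- (- complex_of_real t)) powr complex_of_real \<beta> * ln (- (- complex_of_real t)) ^ j)
        = f (- complex_of_real t) - (\<Sum>(b, j)\<in>expansion_support d. d b j * pow_ln b j t)) at_top"
      using eventually_gt_at_top[of 0]
      by eventually_elim
         (auto simp: expansion_support_def pow_ln_def powr_of_real Ln_of_real mult.assoc
               intro!: sum.cong)
    then have "((\<lambda>x. f x - (\<Sum>(\<beta>, j)\<in>{(\<beta>, j). d \<beta> j \<noteq> 0}.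
          d \<beta> j * (- x) powr complex_of_real \<beta> * ln (- x) ^ j)) \<longlongrightarrow> 0) (filtermap (\<lambda>t. - complex_of_real t) at_top)
      \<longleftrightarrow> ((\<lambda>t. f (- complex_of_real t) - (\<Sum>(b, j)\<in>expansion_support d. d b j * pow_ln b j t)) \<longlongrightarrow> 0) at_top"
      unfolding tendsto_compose_filtermap[symmetric] comp_def by (rule tendsto_cong)
    then show ?thesis unfolding has_expansion_def expansion_support_def by blast
  qed
  show ?thesis unfolding const_coeff_def
  proof (rule the_equality)
    fix v assume "\<exists>d. finite {(\<beta>, j). d \<beta> j \<noteq> 0} \<and> v = d 0 k \<and>
      ((\<lambda>x. f x - (\<Sum>(\<beta>, j)\<in>{(\<beta>, j). d \<beta> j \<noteq> 0}. d \<beta> j * (- x) powr complex_of_real \<beta> * ln (- x) ^ j))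
        \<longlongrightarrow> 0) (filtermap (\<lambda>t. - complex_of_real t) at_top)"
    then obtain d where "has_expansion (\<lambda>t. f (- complex_of_real t)) d" "v = d 0 k"
      using expansion_iff by blast
    then show "v = c 0 k" using has_expansion_unique[OF _ assms] by simp
  qed (use assms expansion_iff[of c] in blast)
qed

definition has_const_coeff :: "(real \<Rightarrow> complex) \<Rightarrow> nat \<Rightarrow> complex \<Rightarrow> bool" where
  "has_const_coeff g k v \<longleftrightarrow> (\<exists>c. has_expansion g c \<and> c 0 k = v)"

lemma has_const_coeff_add:
  "has_const_coeff f k v \<Longrightarrow> has_const_coeff g k w \<Longrightarrow> has_const_coeff (\<lambda>t. f t + g t) k (v + w)"
  unfolding has_const_coeff_def using has_expansion_add by fastforce

lemma has_const_coeff_scale: "has_const_coeff f k v \<Longrightarrow> has_const_coeff (\<lambda>t. a * f t) k (a * v)"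
  unfolding has_const_coeff_def using has_expansion_scale by fastforce

lemma has_const_coeff_diff:
  "has_const_coeff f k v \<Longrightarrow> has_const_coeff g k w \<Longrightarrow> has_const_coeff (\<lambda>t. f t - g t) k (v - w)"
  using has_const_coeff_add[of f k v "\<lambda>t. - 1 * g t" "- 1 * w"] has_const_coeff_scale[of g k w "- 1"]
  by simp

lemma has_const_coeff_tendsto_zero: "(f \<longlongrightarrow> 0) at_top \<Longrightarrow> has_const_coeff f k 0"
  unfolding has_const_coeff_def using has_expansion_tendsto_zero by fastforce

lemma has_const_coeff_sum:
  assumes "finite I" "\<And>i. i \<in> I \<Longrightarrow> has_const_coeff (f i) k (v i)"
  shows "has_const_coeff (\<lambda>t. \<Sum>i\<in>I. f i t) k (\<Sum>i\<in>I. v i)"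
  using assms
proof (induction I rule: finite_induct)
  case empty
  then show ?case using has_const_coeff_tendsto_zero[of "\<lambda>t. 0"] by simp
next
  case (insert x F)
  then show ?case using has_const_coeff_add[of "f x" k "v x" "\<lambda>t. \<Sum>i\<in>F. f i t"] by simp
qed

lemma has_const_coeff_eventually_eq:
  "has_const_coeff f k v \<Longrightarrow> eventually (\<lambda>t. f t = g t) at_top \<Longrightarrow> has_const_coeff g k v"
  unfolding has_const_coeff_def using has_expansion_eventually_eq by blast

lemma const_coeff_eqI: "has_const_coeff (\<lambda>t. f (- complex_of_real t)) k v \<Longrightarrow> const_coeff f k = v"
  unfolding has_const_coeff_def using const_coeff_eq by blast

lemma has_const_coeff_of_expansion: "has_expansion g c \<Longrightarrow> has_const_coeff g k (c 0 k)"
  unfolding has_const_coeff_def by blast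

lemma has_const_coeff_poly:
  "has_const_coeff (\<lambda>t. poly p (complex_of_real t)) k (if k = 0 then poly p 0 else 0)"
proof -
  define c :: "real \<Rightarrow> nat \<Rightarrow> complex"
    where "c b j = (\<Sum>m\<le>degree p. coeff p m * (if b = real m \<and> j = 0 then 1 else 0))" for b j
  have "has_expansion (\<lambda>t. \<Sum>m\<le>degree p. coeff p m * pow_ln (real m) 0 t) c"
    unfolding c_def by (intro has_expansion_sum has_expansion_scale has_expansion_pow_ln) auto
  moreover have "eventually (\<lambda>t. (\<Sum>m\<le>degree p. coeff p m * pow_ln (real m) 0 t)
      = poly p (complex_of_real t)) at_top"
    using eventually_gt_at_top[of 0]
  proof eventually_elim
    case (elim t)
    then have "pow_ln (real m) 0 t = complex_of_real t ^ m" for m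
      by (simp add: pow_ln_def powr_realpow)
    then show ?case by (simp add: poly_altdef)
  qed
  ultimately have "has_const_coeff (\<lambda>t. poly p (complex_of_real t)) k (c 0 k)"
    by (rule has_const_coeff_of_expansion[OF has_expansion_eventually_eq])
  moreover have "c 0 k = (\<Sum>m\<le>degree p. if m = 0 then (if k = 0 then coeff p m else 0) else 0)"
    unfolding c_def by (intro sum.cong refl) auto
  ultimately show ?thesis by (cases "k = 0") (simp_all add: poly_0_coeff_0)
qed

lemma has_const_coeff_const: "has_const_coeff (\<lambda>t. a) k (if k = 0 then a else 0)"
  using has_const_coeff_poly[of "[:a:]" k] by (cases "k = 0") auto

lemma has_const_coeff_power: "0 < m \<Longrightarrow> has_const_coeff (\<lambda>t. complex_of_real t ^ m) k 0"
  using has_const_coeff_poly[of "monom 1 m" k] by (cases "k = 0") (auto simp: poly_monom zero_power)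

lemma power_series_remainder_bound:
  fixes a :: "nat \<Rightarrow> complex"
  assumes sums: "(\<lambda>n. a n * u ^ n) sums f" and bound: "\<And>n. norm (a n) * r ^ n \<le> B"
    and "r > 0" and u: "norm u \<le> r / 2"
  shows "norm (f - (\<Sum>n\<le>M. a n * u ^ n)) \<le> 2 * B * (norm u / r) ^ Suc M"
proof -
  define q where "q = norm u / r"
  have q: "0 \<le> q" "q \<le> 1 / 2" unfolding q_def using \<open>r > 0\<close> u by (auto simp: field_simps)
  have "0 \<le> B" using bound[of 0] by (metis norm_ge_zero order_trans power_0 mult_1_right)
  have tail: "(\<lambda>i. a (i + Suc M) * u ^ (i + Suc M)) sums (f - (\<Sum>n\<le>M. a n * u ^ n))"
    using sums_split_initial_segment[OF sums, of "Suc M"] by (simp add: lessThan_Suc_atMost)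
  have term_bound: "norm (a (i + Suc M) * u ^ (i + Suc M)) \<le> B * q ^ Suc M * q ^ i" for i
  proof -
    have "norm (a (i + Suc M)) \<le> B / r ^ (i + Suc M)"
      using bound[of "i + Suc M"] \<open>r > 0\<close> by (simp add: field_simps)
    then have "norm (a (i + Suc M) * u ^ (i + Suc M)) \<le> B / r ^ (i + Suc M) * norm u ^ (i + Suc M)"
      unfolding norm_mult norm_power by (intro mult_right_mono) auto
    also have "\<dots> = B * q ^ Suc M * q ^ i"
      unfolding q_def by (simp add: power_divide power_add mult_ac)
    finally show ?thesis .
  qed
  have geometric: "(\<lambda>i. B * q ^ Suc M * q ^ i) sums (B * q ^ Suc M * (1 / (1 - q)))"
    using q by (intro sums_mult geometric_sums) auto
  have "norm (f - (\<Sum>n\<le>M. a n * u ^ n)) \<le> B * q ^ Suc M * (1 / (1 - q))"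
    using norm_suminf_le[OF term_bound sums_summable[OF geometric]]
      sums_unique[OF tail] sums_unique[OF geometric]
    by simp
  also have "\<dots> \<le> B * q ^ Suc M * 2"
    using q \<open>0 \<le> B\<close> by (intro mult_left_mono) (auto simp: field_simps)
  finally show ?thesis unfolding q_def by (simp add: mult_ac)
qed

lemma power_series_remainder_powr_tendsto_zero:
  fixes a :: "nat \<Rightarrow> complex" and f :: "real \<Rightarrow> complex"
  assumes bound: "\<And>n. norm (a n) * r ^ n \<le> B" and "r > 0"
    and sums: "\<And>u. 0 < u \<Longrightarrow> u \<le> r / 2 \<Longrightarrow> (\<lambda>n. a n * complex_of_real u ^ n) sums f u"
    and "\<gamma> < real (Suc M)"
  shows "((\<lambda>t. complex_of_real (t powr \<gamma>) * (f (1 / t) - (\<Sum>n\<le>M. a n * complex_of_real (1 / t) ^ n)))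
    \<longlongrightarrow> 0) at_top"
proof (rule Lim_null_comparison)
  show "eventually (\<lambda>t. norm (complex_of_real (t powr \<gamma>)
        * (f (1 / t) - (\<Sum>n\<le>M. a n * complex_of_real (1 / t) ^ n)))
      \<le> 2 * B / r ^ Suc M * t powr (\<gamma> - real (Suc M))) at_top"
    using eventually_ge_at_top[of "2 / r"]
  proof eventually_elim
    case (elim t)
    have "t > 0" using elim \<open>r > 0\<close> by (smt (verit) divide_pos_pos)
    have u: "norm (complex_of_real (1 / t)) = 1 / t" "1 / t \<le> r / 2"
      using elim \<open>t > 0\<close> \<open>r > 0\<close> unfolding norm_of_real by (auto simp: field_simps)
    have "norm (f (1 / t) - (\<Sum>n\<le>M. a n * complex_of_real (1 / t) ^ n))
        \<le> 2 * B * (norm (complex_of_real (1 / t)) / r) ^ Suc M"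
      using u \<open>t > 0\<close>
      by (intro power_series_remainder_bound[OF sums bound \<open>r > 0\<close>]) auto
    also have "\<dots> = 2 * B / r ^ Suc M * (1 / t) ^ Suc M"
      unfolding u(1) by (simp add: power_divide power_mult_distrib mult_ac)
    finally have "norm (complex_of_real (t powr \<gamma>)
          * (f (1 / t) - (\<Sum>n\<le>M. a n * complex_of_real (1 / t) ^ n)))
        \<le> t powr \<gamma> * (2 * B / r ^ Suc M * (1 / t) ^ Suc M)"
      unfolding norm_mult norm_of_real abs_of_nonneg[OF powr_ge_zero]
      by (rule mult_left_mono) simp
    also have "\<dots> = 2 * B / r ^ Suc M * (t powr \<gamma> / t ^ Suc M)"
      by (simp add: power_divide)
    also have "t powr \<gamma> / t ^ Suc M = t powr (\<gamma> - real (Suc M))"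
      using \<open>t > 0\<close> by (simp only: powr_diff powr_realpow[symmetric])
    finally show ?case .
  qed
  have "((\<lambda>t::real. t powr (- (real (Suc M) - \<gamma>))) \<longlongrightarrow> 0) at_top"
    using \<open>\<gamma> < real (Suc M)\<close> by (intro tendsto_neg_powr filterlim_ident) auto
  then show "((\<lambda>t. 2 * B / r ^ Suc M * t powr (\<gamma> - real (Suc M))) \<longlongrightarrow> 0) at_top"
    using tendsto_mult_left[of _ 0 at_top "2 * B / r ^ Suc M"] by simp
qed

lemma has_expansion_powr_mult_power_series:
  fixes a :: "nat \<Rightarrow> complex" and f :: "real \<Rightarrow> complex"
  assumes bound: "\<And>n. norm (a n) * r ^ n \<le> B" and "r > 0"
    and sums: "\<And>u. 0 < u \<Longrightarrow> u \<le> r / 2 \<Longrightarrow> (\<lambda>n. a n * complex_of_real u ^ n) sums f u"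
  shows "\<exists>c. has_expansion (\<lambda>t. complex_of_real (t powr \<gamma>) * f (1 / t)) c"
proof -
  define M where "M = nat \<lceil>\<gamma>\<rceil>"
  define R where
    "R t = complex_of_real (t powr \<gamma>) * (f (1 / t) - (\<Sum>n\<le>M. a n * complex_of_real (1 / t) ^ n))" for t
  have "\<gamma> < real (Suc M)" unfolding M_def by linarith
  then have "(R \<longlongrightarrow> 0) at_top"
    unfolding R_def using power_series_remainder_powr_tendsto_zero[OF bound \<open>r > 0\<close> sums] by blast
  then have "has_expansion (\<lambda>t. (\<Sum>n\<le>M. a n * pow_ln (\<gamma> - real n) 0 t) + R t)
      (\<lambda>b j. (\<Sum>n\<le>M. a n * (if b = \<gamma> - real n \<and> j = 0 then 1 else 0)) + 0)"
    by (intro has_expansion_add has_expansion_sum has_expansion_scale has_expansion_pow_ln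
        has_expansion_tendsto_zero) auto
  moreover have "eventually (\<lambda>t. (\<Sum>n\<le>M. a n * pow_ln (\<gamma> - real n) 0 t) + R t
      = complex_of_real (t powr \<gamma>) * f (1 / t)) at_top"
    using eventually_gt_at_top[of 0]
  proof eventually_elim
    case (elim t)
    then have "pow_ln (\<gamma> - real n) 0 t = complex_of_real (t powr \<gamma>) * complex_of_real (1 / t) ^ n" for n
      by (simp add: pow_ln_def powr_diff powr_realpow power_divide flip: of_real_power)
    then show ?case
      by (simp add: R_def sum_distrib_left right_diff_distrib mult_ac)
  qed
  ultimately have "has_expansion (\<lambda>t. complex_of_real (t powr \<gamma>) * f (1 / t))
      (\<lambda>b j. (\<Sum>n\<le>M. a n * (if b = \<gamma> - real n \<and> j = 0 then 1 else 0)) + 0)"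
    by (rule has_expansion_eventually_eq)
  then show ?thesis by blast
qed

lemma has_expansion_one_plus_powr: "\<exists>c. has_expansion (\<lambda>t. complex_of_real ((1 + t) powr \<alpha>)) c"
proof -
  have "summable (\<lambda>n. (\<alpha> gchoose n) * (1 / 2) ^ n)"
    using gen_binomial_real[of "1 / 2" \<alpha>] by (simp add: sums_iff)
  then have "Bseq (\<lambda>n. (\<alpha> gchoose n) * (1 / 2) ^ n)"
    by (intro convergent_imp_Bseq convergentI[OF summable_LIMSEQ_zero])
  then obtain B where B: "\<And>n. norm ((\<alpha> gchoose n) * (1 / 2) ^ n) \<le> B"
    by (meson BseqE less_imp_le)
  have binomial: "(\<lambda>n. complex_of_real (\<alpha> gchoose n) * complex_of_real u ^ n)
      sums complex_of_real ((1 + u) powr \<alpha>)"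
    if "0 < u" "u \<le> 1 / 4" for u
  proof -
    have "(\<lambda>n. complex_of_real ((\<alpha> gchoose n) * u ^ n)) sums complex_of_real ((1 + u) powr \<alpha>)"
      unfolding sums_of_real_iff using that by (intro gen_binomial_real) auto
    then show ?thesis by simp
  qed
  then obtain c
    where "has_expansion (\<lambda>t. complex_of_real (t powr \<alpha>) * complex_of_real ((1 + 1 / t) powr \<alpha>)) c"
    using has_expansion_powr_mult_power_series[of "\<lambda>n. complex_of_real (\<alpha> gchoose n)" "1 / 2" B
        "\<lambda>u. complex_of_real ((1 + u) powr \<alpha>)" \<alpha>] B binomial
    by (auto simp: abs_mult)
  moreover have "eventually (\<lambda>t. complex_of_real (t powr \<alpha>) * complex_of_real ((1 + 1 / t) powr \<alpha>)
      = complex_of_real ((1 + t) powr \<alpha>)) at_top"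
    using eventually_gt_at_top[of 0]
  proof eventually_elim
    case (elim t)
    then have "t powr \<alpha> * (1 + 1 / t) powr \<alpha> = (t * (1 + 1 / t)) powr \<alpha>"
      by (simp add: powr_mult)
    also have "t * (1 + 1 / t) = 1 + t" using elim by (simp add: field_simps)
    finally show ?case by (simp flip: of_real_mult)
  qed
  ultimately have "has_expansion (\<lambda>t. complex_of_real ((1 + t) powr \<alpha>)) c"
    by (rule has_expansion_eventually_eq)
  then show ?thesis by blast
qed

lemma has_expansion_powr_mult_ln_one_plus_inverse:
  "\<exists>c. has_expansion (\<lambda>t. complex_of_real (t powr \<gamma>) * complex_of_real (ln (1 + 1 / t))) c"
proof (rule has_expansion_powr_mult_power_series)
  show "norm ((-1) ^ Suc n / of_nat n :: complex) * 1 ^ n \<le> 1" for n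
    unfolding norm_divide norm_power norm_minus_cancel norm_one norm_of_nat by (cases n) auto
  show "(\<lambda>n. (-1) ^ Suc n / of_nat n * complex_of_real u ^ n) sums complex_of_real (ln (1 + u))"
    if "0 < u" "u \<le> 1 / 2" for u
    using Ln_series[of "complex_of_real u"] Ln_of_real[of "1 + u"] that by simp
qed simp

lemma has_expansion_one_plus_power_mult_ln:
  "\<exists>c. has_expansion (\<lambda>t. complex_of_real ((1 + t) ^ l * ln (1 + t))) c"
proof -
  have "\<forall>m. \<exists>c. has_expansion
      (\<lambda>t. complex_of_real (t powr real m) * complex_of_real (ln (1 + 1 / t))) c"
    using has_expansion_powr_mult_ln_one_plus_inverse by blast
  then obtain C where C: "\<And>m. has_expansion
      (\<lambda>t. complex_of_real (t powr real m) * complex_of_real (ln (1 + 1 / t))) (C m)"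
    by metis
  have "has_expansion (\<lambda>t. \<Sum>m\<le>l. of_nat (l choose m) * (pow_ln (real m) 1 t
      + complex_of_real (t powr real m) * complex_of_real (ln (1 + 1 / t))))
     (\<lambda>b j. \<Sum>m\<le>l. of_nat (l choose m) * ((if b = real m \<and> j = 1 then 1 else 0) + C m b j))"
    by (intro has_expansion_sum has_expansion_scale has_expansion_add has_expansion_pow_ln C) auto
  moreover have "eventually (\<lambda>t. (\<Sum>m\<le>l. of_nat (l choose m) * (pow_ln (real m) 1 t
      + complex_of_real (t powr real m) * complex_of_real (ln (1 + 1 / t))))
     = complex_of_real ((1 + t) ^ l * ln (1 + t))) at_top"
    using eventually_gt_at_top[of 0]
  proof eventually_elim
    case (elim t)
    have "1 + t = t * (1 + 1 / t)" using elim by (simp add: field_simps)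
    then have "ln (1 + t) = ln (t * (1 + 1 / t))" by (rule arg_cong)
    also have "\<dots> = ln t + ln (1 + 1 / t)" using elim by (intro ln_mult_pos) (auto intro: add_pos_pos)
    finally have ln_split: "ln (1 + t) = ln t + ln (1 + 1 / t)" .
    have binomial: "(1 + t) ^ l = (\<Sum>m\<le>l. real (l choose m) * t ^ m)"
      using binomial_ring[of t 1 l] by (simp add: add.commute mult.commute)
    have "(1 + t) ^ l * ln (1 + t)
        = (\<Sum>m\<le>l. real (l choose m) * (t powr real m * ln t + t powr real m * ln (1 + 1 / t)))"
      unfolding binomial ln_split sum_distrib_right using elim
      by (intro sum.cong refl) (simp add: powr_realpow algebra_simps)
    then have "complex_of_real ((1 + t) ^ l * ln (1 + t)) = (\<Sum>m\<le>l. of_nat (l choose m) *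
        complex_of_real (t powr real m * ln t + t powr real m * ln (1 + 1 / t)))"
      by simp
    then show ?case by (simp add: pow_ln_def)
  qed
  ultimately have "has_expansion (\<lambda>t. complex_of_real ((1 + t) ^ l * ln (1 + t)))
     (\<lambda>b j. \<Sum>m\<le>l. of_nat (l choose m) * ((if b = real m \<and> j = 1 then 1 else 0) + C m b j))"
    by (rule has_expansion_eventually_eq)
  then show ?thesis by blast
qed

section \<open>Logarithmic Gamma functions of shifted sequences\<close>

lemma Re_ge_of_mem_sector:
  assumes "0 < c" "\<theta> < pi" "z \<in> sector c \<theta>"
  shows "c \<le> Re z"
proof (cases "z = complex_of_real c")
  case False
  then have "\<bar>Arg (z - complex_of_real c)\<bar> \<le> \<theta> / 2"
    using assms(3) unfolding sector_def by auto
  then have "0 \<le> cos (Arg (z - complex_of_real c))" using assms by (intro cos_ge_zero) auto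
  moreover have "Re (z - complex_of_real c)
      = norm (z - complex_of_real c) * cos (Arg (z - complex_of_real c))"
    using cos_Arg[of "z - complex_of_real c"] False by simp
  ultimately have "0 \<le> Re (z - complex_of_real c)" by simp
  then show ?thesis by simp
qed simp

lemma neg_of_real_notin_sector:
  assumes "0 < c" "\<theta> < pi" "0 < w"
  shows "- complex_of_real w \<notin> sector c \<theta>"
proof -
  have "Arg (- complex_of_real w - complex_of_real c) = pi"
    using assms Arg_of_real[of "- w - c"] by simp
  moreover have "- complex_of_real w \<noteq> complex_of_real c"
    using assms by (metis of_real_minus of_real_eq_iff neg_less_0_iff_less less_asym)
  moreover have "\<not> \<bar>pi\<bar> \<le> \<theta> / 2" using assms pi_gt_zero by linarith
  ultimately show ?thesis unfolding sector_def by auto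
qed

lemma Ln_divide_of_Re_pos:
  assumes "0 < Re x" "0 < Re y"
  shows "Ln (x / y) = Ln x - Ln y"
proof -
  have "\<bar>Im (Ln x)\<bar> < pi / 2" "\<bar>Im (Ln y)\<bar> < pi / 2" using assms Re_Ln_pos_lt_imp by auto
  then have "- pi < Im (Ln x - Ln y)" "Im (Ln x - Ln y) \<le> pi" by auto
  moreover have "x \<noteq> 0" "y \<noteq> 0" using assms by auto
  then have "exp (Ln x - Ln y) = x / y" by (simp add: exp_diff)
  ultimately show ?thesis by (metis Ln_exp)
qed

lemma Re_of_real_divide_pos:
  assumes "0 < Re \<mu>" "0 < s"
  shows "0 < Re (complex_of_real s / \<mu>)"
proof -
  have "0 < (Re \<mu>)\<^sup>2 + (Im \<mu>)\<^sup>2" using assms by (simp add: add_pos_nonneg)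
  then show ?thesis using assms by (simp add: Re_divide)
qed

lemma norm_of_real_add_ge:
  assumes "0 \<le> Re \<mu>" "0 \<le> s"
  shows "norm \<mu> \<le> norm (complex_of_real s + \<mu>)"
proof -
  have "(norm \<mu>)\<^sup>2 = (Re \<mu>)\<^sup>2 + (Im \<mu>)\<^sup>2" by (simp add: cmod_power2)
  also have "\<dots> \<le> (s + Re \<mu>)\<^sup>2 + (Im \<mu>)\<^sup>2" using assms by (intro add_right_mono power_mono) auto
  also have "\<dots> = (norm (complex_of_real s + \<mu>))\<^sup>2" by (simp add: cmod_power2)
  finally show ?thesis by (rule power2_le_imp_le) simp
qed

lemma summable_norm_powr_neg_imp_pos:
  assumes "summable (\<lambda>n. norm (S n) powr (- s))" "0 < c" "\<And>n. c \<le> norm (S n)"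
  shows "0 < s"
proof (rule ccontr)
  assume "\<not> 0 < s"
  then have "c powr (- s) \<le> norm (S n) powr (- s)" for n
    using assms(2,3) by (intro powr_mono2) auto
  then have "c powr (- s) \<le> 0"
    using summable_LIMSEQ_zero[OF assms(1)]
    by (intro tendsto_lowerbound) (auto intro: always_eventually)
  then show False using \<open>0 < c\<close> by simp
qed

lemma exponent_conv_nonneg:
  assumes "\<exists>s. summable (\<lambda>n. norm (S n) powr (- s))" "0 < c" "\<And>n. c \<le> norm (S n)"
  shows "0 \<le> exponent_conv S"
  unfolding exponent_conv_def
  using assms summable_norm_powr_neg_imp_pos[OF _ assms(2,3)]
  by (intro cInf_greatest) (auto intro: less_imp_le)

lemma summable_inverse_power_genus:
  assumes summable: "summable (\<lambda>n. norm (S n) powr (- s))"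
    and "0 < c" and bound: "\<And>n. c \<le> norm (S n)"
  shows "summable (\<lambda>n. 1 / norm (S n) ^ Suc (genus S))"
proof -
  have "0 < s" by (rule summable_norm_powr_neg_imp_pos[OF summable \<open>0 < c\<close> bound])
  define p where "p = nat \<lceil>s\<rceil>"
  have "eventually (\<lambda>n. norm (1 / norm (S n) ^ Suc p) \<le> norm (S n) powr (- s)) sequentially"
    using order_tendstoD(2)[OF summable_LIMSEQ_zero[OF summable] zero_less_one]
  proof eventually_elim
    case (elim n)
    have pos: "0 < norm (S n)" using bound[of n] \<open>0 < c\<close> by linarith
    have "1 \<le> norm (S n)"
    proof (rule ccontr)
      assume "\<not> 1 \<le> norm (S n)"
      then have "norm (S n) powr s \<le> 1" using pos \<open>0 < s\<close> powr_le1 by simp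
      then have "1 \<le> norm (S n) powr (- s)" using pos by (simp add: powr_minus field_simps)
      then show False using elim by simp
    qed
    then have "norm (S n) powr s \<le> norm (S n) powr real (Suc p)"
      unfolding p_def by (intro powr_mono) linarith+
    then have "norm (S n) powr s \<le> norm (S n) ^ Suc p"
      by (simp only: powr_realpow[OF pos])
    then have "1 / norm (S n) ^ Suc p \<le> 1 / norm (S n) powr s"
      using pos by (intro divide_left_mono) auto
    then show ?case using pos by (simp add: powr_minus divide_inverse)
  qed
  then have "summable (\<lambda>n. 1 / norm (S n) ^ Suc p)"
    by (rule summable_comparison_test_ev[OF _ summable])
  then have "\<exists>p. summable (\<lambda>n. 1 / norm (S n) ^ (p + 1))" by auto
  then show ?thesis using LeastI_ex unfolding genus_def by simp
qed

lemma summable_inverse_power_comparison: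
  fixes x y :: "nat \<Rightarrow> real"
  assumes pos: "\<And>n. 0 < x n" and le: "\<And>n. x n / C \<le> y n" and "0 < C"
    and summable: "summable (\<lambda>n. 1 / x n ^ m)"
  shows "summable (\<lambda>n. 1 / y n ^ m)"
proof (rule summable_comparison_test[OF _ summable_mult[OF summable, of "C ^ m"]])
  show "\<exists>N. \<forall>n\<ge>N. norm (1 / y n ^ m) \<le> C ^ m * (1 / x n ^ m)"
  proof (intro exI allI impI)
    fix n
    have "0 < x n / C" using pos[of n] \<open>0 < C\<close> by simp
    then have "1 / y n ^ m \<le> 1 / (x n / C) ^ m"
      using le[of n] by (intro divide_left_mono power_mono mult_pos_pos zero_less_power) auto
    also have "\<dots> = C ^ m * (1 / x n ^ m)" using \<open>0 < C\<close> pos[of n] by (simp add: power_divide)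
    finally show "norm (1 / y n ^ m) \<le> C ^ m * (1 / x n ^ m)"
      using \<open>0 < x n / C\<close> le[of n] by simp
  qed
qed

definition logGamma_term :: "(nat \<Rightarrow> complex) \<Rightarrow> complex \<Rightarrow> nat \<Rightarrow> complex" where
  "logGamma_term S z n = ln (1 + z / S n) + (\<Sum>j=1..genus S. (-1) ^ j / of_nat j * (z / S n) ^ j)"

lemma logGamma_seq_eq_suminf: "logGamma_seq S z = - suminf (logGamma_term S z)"
  unfolding logGamma_seq_def logGamma_term_def by simp

lemma norm_Ln_one_plus_taylor_le:
  fixes u :: complex
  assumes "norm u \<le> 1 / 2"
  shows "norm (Ln (1 + u) + (\<Sum>j=1..g. (-1) ^ j / of_nat j * u ^ j)) \<le> 2 * norm u ^ Suc g"
proof -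
  define a :: "nat \<Rightarrow> complex" where "a n = (-1) ^ Suc n / of_nat n" for n
  have bound: "norm (a n) * 1 ^ n \<le> 1" for n
    unfolding a_def norm_divide norm_power norm_minus_cancel norm_one norm_of_nat by (cases n) auto
  have "(\<lambda>n. a n * u ^ n) sums Ln (1 + u)"
    using Ln_series[of u] assms unfolding a_def by simp
  then have "norm (Ln (1 + u) - (\<Sum>n\<le>g. a n * u ^ n)) \<le> 2 * 1 * (norm u / 1) ^ Suc g"
    using assms by (intro power_series_remainder_bound[OF _ bound]) auto
  moreover have "(\<Sum>n\<le>g. a n * u ^ n) = - (\<Sum>j=1..g. (-1) ^ j / of_nat j * u ^ j)"
  proof -
    have "(\<Sum>n\<le>g. a n * u ^ n) = (\<Sum>n\<in>insert 0 {1..g}. a n * u ^ n)"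
      by (intro sum.cong refl) auto
    also have "\<dots> = - (\<Sum>j=1..g. (-1) ^ j / of_nat j * u ^ j)"
      by (simp add: a_def sum_negf[symmetric])
    finally show ?thesis .
  qed
  ultimately show ?thesis by simp
qed

lemma summable_logGamma_term:
  assumes nonzero: "\<And>n. S n \<noteq> 0" and summable: "summable (\<lambda>n. 1 / norm (S n) ^ Suc (genus S))"
  shows "summable (logGamma_term S z)"
proof -
  define g where "g = genus S"
  define K where "K = 2 * (norm z + 1)"
  have "0 < K" unfolding K_def by (smt (verit) norm_ge_zero)
  have "eventually (\<lambda>n. 1 / norm (S n) ^ Suc g < (1 / K) ^ Suc g) sequentially"
    using summable_LIMSEQ_zero[OF summable] \<open>0 < K\<close> unfolding g_def
    by (intro order_tendstoD(2)) auto
  then have "eventually (\<lambda>n. norm (logGamma_term S z n)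
      \<le> 2 * norm z ^ Suc g * (1 / norm (S n) ^ Suc g)) sequentially"
  proof eventually_elim
    case (elim n)
    have pos: "0 < norm (S n)" using nonzero by simp
    have "(1 / norm (S n)) ^ Suc g < (1 / K) ^ Suc g"
      using elim by (simp only: power_divide power_one)
    then have "1 / norm (S n) < 1 / K"
      by (rule power_less_imp_less_base) (use \<open>0 < K\<close> in simp)
    then have "K < norm (S n)"
      using pos \<open>0 < K\<close> by (metis frac_le less_eq_real_def linorder_not_le zero_less_one)
    then have "norm z / norm (S n) \<le> 1 / 2" using pos unfolding K_def by (simp add: divide_le_eq)
    then have "norm (z / S n) \<le> 1 / 2" by (simp only: norm_divide)
    then have "norm (logGamma_term S z n) \<le> 2 * norm (z / S n) ^ Suc g"
      unfolding logGamma_term_def g_def by (rule norm_Ln_one_plus_taylor_le)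
    then show ?case by (simp add: norm_divide power_divide)
  qed
  then show ?thesis
    by (rule summable_comparison_test_ev[OF _ summable_mult[OF summable[folded g_def]]])
qed

definition lagrange_basis :: "nat \<Rightarrow> nat \<Rightarrow> 'a :: field_char_0 poly" where
  "lagrange_basis g i = smult (1 / (\<Prod>k\<in>{..g} - {i}. (of_nat i - of_nat k)))
      (\<Prod>k\<in>{..g} - {i}. [:- of_nat k, 1:])"

lemma poly_lagrange_basis:
  assumes "i \<le> g" "i' \<le> g"
  shows "poly (lagrange_basis g i) (of_nat i' :: 'a :: field_char_0) = (if i = i' then 1 else 0)"
proof -
  have "(\<Prod>k\<in>{..g} - {i}. (of_nat i' - of_nat k :: 'a)) = 0 \<longleftrightarrow> i' \<noteq> i"
    using assms by (subst prod_zero_iff) auto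
  then show ?thesis unfolding lagrange_basis_def by (auto simp: poly_prod)
qed

lemma degree_lagrange_basis:
  assumes "i \<le> g"
  shows "degree (lagrange_basis g i :: 'a :: field_char_0 poly) \<le> g"
proof -
  have "degree (\<Prod>k\<in>{..g} - {i}. [:- of_nat k, 1:] :: 'a poly)
      \<le> (\<Sum>k\<in>{..g} - {i}. degree ([:- of_nat k, 1:] :: 'a poly))"
    using degree_prod_sum_le[of "{..g} - {i}" "\<lambda>k. [:- of_nat k, 1:] :: 'a poly"]
    by (simp add: o_def)
  also have "\<dots> = g" using assms by simp
  finally show ?thesis unfolding lagrange_basis_def using degree_smult_le order_trans by blast
qed

lemma poly_eq_sum_lagrange_basis:
  fixes r :: "'a :: field_char_0 poly"
  assumes "degree r \<le> g"
  shows "r = (\<Sum>i\<le>g. smult (poly r (of_nat i)) (lagrange_basis g i))"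
proof (rule poly_eqI_degree[where A = "of_nat ` {..g}"])
  fix x :: 'a assume "x \<in> of_nat ` {..g}"
  then obtain i' where "i' \<le> g" "x = of_nat i'" by auto
  then show "poly r x = poly (\<Sum>i\<le>g. smult (poly r (of_nat i)) (lagrange_basis g i)) x"
    by (simp add: poly_sum poly_lagrange_basis if_distrib[of "(*) _"] cong: if_cong)
next
  have card: "card (of_nat ` {..g} :: 'a set) = Suc g"
    by (subst card_image) (auto simp: inj_on_def)
  show "degree r < card (of_nat ` {..g} :: 'a set)" using assms card by simp
  have "degree (\<Sum>i\<le>g. smult (poly r (of_nat i)) (lagrange_basis g i)) \<le> g"
    by (intro degree_sum_le) (auto intro: order_trans[OF degree_smult_le] degree_lagrange_basis)
  then show "degree (\<Sum>i\<le>g. smult (poly r (of_nat i)) (lagrange_basis g i))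
      < card (of_nat ` {..g} :: 'a set)"
    using card by simp
qed

text \<open>Expand each term in the Lagrange basis of the nodes \<open>0, \<dots>, g\<close>.\<close>
lemma sums_poly_of_degree_le:
  fixes q :: "nat \<Rightarrow> 'a :: real_normed_field poly"
  assumes "\<And>n. degree (q n) \<le> g" and "\<And>i. i \<le> g \<Longrightarrow> summable (\<lambda>n. poly (q n) (of_nat i))"
  obtains p where "\<And>z. (\<lambda>n. poly (q n) z) sums poly p z"
proof
  fix z
  have "(\<lambda>n. \<Sum>i\<le>g. poly (q n) (of_nat i) * poly (lagrange_basis g i) z)
      sums (\<Sum>i\<le>g. (\<Sum>n. poly (q n) (of_nat i)) * poly (lagrange_basis g i) z)"
    using assms(2) by (intro sums_sum sums_mult2 summable_sums) auto
  moreover have "poly (q n) z = (\<Sum>i\<le>g. poly (q n) (of_nat i) * poly (lagrange_basis g i) z)" for n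
    by (subst poly_eq_sum_lagrange_basis[OF assms(1)[of n]]) (simp add: poly_sum)
  ultimately show "(\<lambda>n. poly (q n) z) sums
      poly (\<Sum>i\<le>g. smult (\<Sum>n. poly (q n) (of_nat i)) (lagrange_basis g i)) z"
    by (simp add: poly_sum)
qed

lemma summable_inverse_power_shift_iff:
  fixes S :: "nat \<Rightarrow> complex"
  assumes "0 < \<sigma>" "0 < c" and Re: "\<And>n. c \<le> Re (S n)"
  shows "summable (\<lambda>n. 1 / norm ((complex_of_real \<sigma> + S n) / complex_of_real \<sigma>) ^ m)
    \<longleftrightarrow> summable (\<lambda>n. 1 / norm (S n) ^ m)"
proof -
  define T where "T n = (complex_of_real \<sigma> + S n) / complex_of_real \<sigma>" for n
  define C where "C = (\<sigma> / c + 1) / \<sigma>"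
  have "0 < C" unfolding C_def using assms by (simp add: add_pos_pos)
  have S_ge: "c \<le> norm (S n)" for n using Re[of n] complex_Re_le_cmod[of "S n"] by linarith
  then have S_pos: "0 < norm (S n)" for n using \<open>0 < c\<close> by (smt (verit))
  have T_ge: "norm (S n) / \<sigma> \<le> norm (T n)" for n
  proof -
    have "0 \<le> Re (S n)" using Re[of n] \<open>0 < c\<close> by linarith
    then have "norm (S n) \<le> norm (complex_of_real \<sigma> + S n)"
      using \<open>0 < \<sigma>\<close> by (intro norm_of_real_add_ge) auto
    then show ?thesis
      unfolding T_def norm_divide using \<open>0 < \<sigma>\<close> by (simp add: divide_right_mono)
  qed
  then have T_pos: "0 < norm (T n)" for n
    using S_pos[of n] \<open>0 < \<sigma>\<close> by (smt (verit) divide_pos_pos)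
  have S_ge': "norm (T n) / C \<le> norm (S n)" for n
  proof -
    have "norm (complex_of_real \<sigma> + S n) \<le> \<sigma> + norm (S n)"
      using norm_triangle_ineq[of "complex_of_real \<sigma>" "S n"] \<open>0 < \<sigma>\<close> by simp
    also have "\<dots> \<le> (\<sigma> / c + 1) * norm (S n)"
      using S_ge[of n] assms by (simp add: field_simps)
    finally have "norm (T n) \<le> C * norm (S n)"
      unfolding T_def norm_divide C_def using \<open>0 < \<sigma>\<close> by (simp add: field_simps)
    then show ?thesis using \<open>0 < C\<close> by (simp add: field_simps)
  qed
  show ?thesis
    unfolding T_def[symmetric]
    using summable_inverse_power_comparison[of "\<lambda>n. norm (T n)" C "\<lambda>n. norm (S n)" m,
        OF T_pos S_ge' \<open>0 < C\<close>]
      summable_inverse_power_comparison[of "\<lambda>n. norm (S n)" \<sigma> "\<lambda>n. norm (T n)" m,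
        OF S_pos T_ge \<open>0 < \<sigma>\<close>]
    by blast
qed

text \<open>Difference of the Taylor corrections in \<^const>\<open>logGamma_term\<close> for the shifted and the
  unshifted sequence; \<open>\<mu>\<close> stands for an element of the sequence.\<close>
definition shift_poly :: "real \<Rightarrow> complex \<Rightarrow> nat \<Rightarrow> complex poly" where
  "shift_poly \<sigma> \<mu> g = (\<Sum>j=1..g. smult ((-1) ^ j / of_nat j)
      ([:0, complex_of_real \<sigma> / (complex_of_real \<sigma> + \<mu>):] ^ j
       - [:complex_of_real \<sigma> / \<mu>, complex_of_real \<sigma> / \<mu>:] ^ j + [:(complex_of_real \<sigma> / \<mu>) ^ j:]))"

lemma degree_shift_poly: "degree (shift_poly \<sigma> \<mu> g) \<le> g"
proof (unfold shift_poly_def,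
    intro degree_sum_le order_trans[OF degree_smult_le] degree_add_le degree_diff_le)
  fix j assume "j \<in> {1..g}"
  then show "degree ([:0, complex_of_real \<sigma> / (complex_of_real \<sigma> + \<mu>):] ^ j) \<le> g"
    and "degree ([:complex_of_real \<sigma> / \<mu>, complex_of_real \<sigma> / \<mu>:] ^ j) \<le> g"
    by (auto intro: order_trans[OF degree_power_le])
qed simp_all

lemma poly_shift_poly_0: "poly (shift_poly \<sigma> \<mu> g) 0 = 0"
  unfolding shift_poly_def by (simp add: poly_sum poly_power)

lemma logGamma_term_shift:
  fixes S :: "nat \<Rightarrow> complex"
  assumes "0 < \<sigma>" "0 \<le> t" "0 < Re (S n)"
    and genus: "genus (\<lambda>n. (complex_of_real \<sigma> + S n) / complex_of_real \<sigma>) = genus S"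
  shows "logGamma_term (\<lambda>n. (complex_of_real \<sigma> + S n) / complex_of_real \<sigma>) (complex_of_real t) n
    = logGamma_term S (complex_of_real (\<sigma> * (1 + t))) n - logGamma_term S (complex_of_real \<sigma>) n
      + poly (shift_poly \<sigma> (S n) (genus S)) (complex_of_real t)"
proof -
  define \<mu> where "\<mu> = S n"
  define A where "A = complex_of_real \<sigma> / (complex_of_real \<sigma> + \<mu>)"
  define B where "B = complex_of_real \<sigma> / \<mu>"
  have "\<mu> \<noteq> 0" using assms unfolding \<mu>_def by auto
  have "0 < Re (complex_of_real \<sigma> + \<mu>)" using assms unfolding \<mu>_def by simp
  then have "complex_of_real \<sigma> + \<mu> \<noteq> 0" by (auto simp: complex_eq_iff)
  have Re_pos: "0 < Re (1 + complex_of_real (\<sigma> * (1 + t)) / \<mu>)" "0 < Re (1 + B)"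
    using Re_of_real_divide_pos[of \<mu> "\<sigma> * (1 + t)"] Re_of_real_divide_pos[of \<mu> \<sigma>] assms
    unfolding \<mu>_def B_def by auto
  have "1 + B \<noteq> 0" using Re_pos(2) by (auto simp: complex_eq_iff)
  have "1 + complex_of_real t * A = (1 + complex_of_real (\<sigma> * (1 + t)) / \<mu>) / (1 + B)"
  proof -
    define D where "D = complex_of_real \<sigma> + \<mu>"
    define X where "X = D + complex_of_real t * complex_of_real \<sigma>"
    have "1 + complex_of_real t * A = X / D"
      unfolding A_def X_def D_def using \<open>complex_of_real \<sigma> + \<mu> \<noteq> 0\<close> by (simp add: field_simps)
    moreover have "1 + B = D / \<mu>" "1 + complex_of_real (\<sigma> * (1 + t)) / \<mu> = X / \<mu>"
      unfolding B_def X_def D_def using \<open>\<mu> \<noteq> 0\<close> by (simp_all add: field_simps)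
    ultimately show ?thesis using \<open>\<mu> \<noteq> 0\<close> \<open>complex_of_real \<sigma> + \<mu> \<noteq> 0\<close> unfolding D_def by simp
  qed
  then have Ln_shift:
      "Ln (1 + complex_of_real t * A) = Ln (1 + complex_of_real (\<sigma> * (1 + t)) / \<mu>) - Ln (1 + B)"
    using Ln_divide_of_Re_pos[OF Re_pos] by simp
  have t_div: "complex_of_real t / ((complex_of_real \<sigma> + \<mu>) / complex_of_real \<sigma>) = complex_of_real t * A"
    unfolding A_def using \<open>0 < \<sigma>\<close> by (simp add: field_simps)
  have shifted_div: "complex_of_real (\<sigma> * (1 + t)) / \<mu> = B * (1 + complex_of_real t)"
    unfolding B_def using \<open>\<mu> \<noteq> 0\<close> by (simp add: field_simps)
  have poly_eq: "poly (shift_poly \<sigma> \<mu> (genus S)) (complex_of_real t) = (\<Sum>j=1..genus S.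
      (-1) ^ j / of_nat j * ((complex_of_real t * A) ^ j - (B * (1 + complex_of_real t)) ^ j + B ^ j))"
    unfolding shift_poly_def poly_sum poly_smult A_def B_def
    by (intro sum.cong refl) (simp add: poly_power mult_ac algebra_simps add_divide_distrib)
  show ?thesis
    unfolding logGamma_term_def genus \<mu>_def[symmetric] t_div Ln_shift shifted_div poly_eq
      B_def[symmetric]
    by (simp add: sum.distrib[symmetric] sum_subtractf[symmetric] algebra_simps)
qed

lemma logGamma_seq_shift:
  fixes S :: "nat \<Rightarrow> complex"
  assumes "0 < \<sigma>" "0 < c" and Re: "\<And>n. c \<le> Re (S n)"
    and summable: "summable (\<lambda>n. 1 / norm (S n) ^ Suc (genus S))"
  obtains p where "poly p 0 = 0"
    and "\<And>t. 0 \<le> t \<Longrightarrow> logGamma_seq (\<lambda>n. (complex_of_real \<sigma> + S n) / complex_of_real \<sigma>) (complex_of_real t)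
      = logGamma_seq S (complex_of_real (\<sigma> * (1 + t))) - logGamma_seq S (complex_of_real \<sigma>)
        - poly p (complex_of_real t)"
proof -
  define T where "T = (\<lambda>n. (complex_of_real \<sigma> + S n) / complex_of_real \<sigma>)"
  define q where "q n = shift_poly \<sigma> (S n) (genus S)" for n
  have Re_pos: "0 < Re (S n)" for n using Re[of n] \<open>0 < c\<close> by linarith
  then have "S n \<noteq> 0" for n by (metis zero_complex.sel(1) less_irrefl)
  moreover have "T n \<noteq> 0" for n
    using Re_pos[of n] \<open>0 < \<sigma>\<close> unfolding T_def by (auto simp: complex_eq_iff)
  moreover have genus: "genus T = genus S"
    unfolding genus_def T_def summable_inverse_power_shift_iff[OF \<open>0 < \<sigma>\<close> \<open>0 < c\<close> Re] ..
  moreover have "summable (\<lambda>n. 1 / norm (T n) ^ Suc (genus T))"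
    using summable unfolding genus
    unfolding T_def summable_inverse_power_shift_iff[OF \<open>0 < \<sigma>\<close> \<open>0 < c\<close> Re] .
  ultimately have summable_terms: "summable (logGamma_term S z)" "summable (logGamma_term T z)" for z
    using summable by (auto intro: summable_logGamma_term)
  have term_shift: "logGamma_term T (complex_of_real t) n
      = logGamma_term S (complex_of_real (\<sigma> * (1 + t))) n - logGamma_term S (complex_of_real \<sigma>) n
        + poly (q n) (complex_of_real t)" if "0 \<le> t" for t n
    using \<open>0 < \<sigma>\<close> that Re_pos genus unfolding T_def q_def by (rule logGamma_term_shift)
  have "summable (\<lambda>n. poly (q n) (of_nat i))" for i
  proof -
    have "poly (q n) (of_nat i) = logGamma_term T (complex_of_real (real i)) n
        - logGamma_term S (complex_of_real (\<sigma> * (1 + real i))) n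
        + logGamma_term S (complex_of_real \<sigma>) n" for n
      using term_shift[of "real i" n] by simp
    then show ?thesis by (simp add: summable_add summable_diff summable_terms)
  qed
  then obtain p where p: "\<And>z. (\<lambda>n. poly (q n) z) sums poly p z"
    using sums_poly_of_degree_le[of q "genus S"] unfolding q_def by (metis degree_shift_poly)
  show ?thesis
  proof (rule that)
    show "poly p 0 = 0"
      using p[of 0] unfolding q_def by (simp add: poly_shift_poly_0 sums_iff)
    fix t :: real assume "0 \<le> t"
    have "suminf (logGamma_term T (complex_of_real t))
        = suminf (logGamma_term S (complex_of_real (\<sigma> * (1 + t))))
          - suminf (logGamma_term S (complex_of_real \<sigma>)) + poly p (complex_of_real t)"
      unfolding term_shift[OF \<open>0 \<le> t\<close>]
      using summable_terms sums_unique[OF p[of "complex_of_real t"]]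
      by (subst suminf_add[symmetric]) (auto intro!: summable_diff simp: suminf_diff sums_summable[OF p])
    then show "logGamma_seq (\<lambda>n. (complex_of_real \<sigma> + S n) / complex_of_real \<sigma>) (complex_of_real t)
        = logGamma_seq S (complex_of_real (\<sigma> * (1 + t))) - logGamma_seq S (complex_of_real \<sigma>)
          - poly p (complex_of_real t)"
      unfolding logGamma_seq_eq_suminf T_def by simp
  qed
qed

section \<open>Decomposition over the first sequence\<close>

lemma totally_regular_spectral_sector:
  assumes "totally_regular_spectral S s p \<alpha> N a"
  obtains c \<theta> where "0 < c" "\<theta> < pi" "\<And>n. c \<le> Re (S n)"
  using assms Re_ge_of_mem_sector unfolding totally_regular_spectral_def by (metis rangeI subsetD)

lemma totally_regular_spectral_exponent_nonneg:
  assumes "totally_regular_spectral S s p \<alpha> N a"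
  shows "0 \<le> s"
proof -
  obtain c \<theta> where "0 < c" "\<theta> < pi" "\<And>n. c \<le> Re (S n)"
    using totally_regular_spectral_sector[OF assms] by blast
  then show ?thesis
    using assms complex_Re_le_cmod order_trans unfolding totally_regular_spectral_def
    by (metis exponent_conv_nonneg)
qed

lemma totally_regular_spectralE:
  assumes "totally_regular_spectral S s p \<alpha> N a"
  obtains c \<theta> where "0 < c" "\<theta> < pi" "\<And>n. c \<le> Re (S n)"
    "summable (\<lambda>n. 1 / norm (S n) ^ Suc (genus S))"
    "(\<lambda>x. logGamma_seq S (- x)
        - (\<Sum>h\<le>N. a (\<alpha> h) 0 * (- x) powr complex_of_real (\<alpha> h))
        - (\<Sum>j\<le>p. a (real j) 1 * (- x) ^ j * ln (- x)))
      \<in> o[outside_sector c \<theta>](\<lambda>x. (- x) powr complex_of_real (\<alpha> N))"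
proof -
  obtain c \<theta> s' where c: "0 < c" "\<theta> < pi" "range S \<subseteq> sector c \<theta>"
    and s': "summable (\<lambda>n. norm (S n) powr (- s'))"
    and remainder: "(\<lambda>x. logGamma_seq S (- x)
        - (\<Sum>h\<le>N. a (\<alpha> h) 0 * (- x) powr complex_of_real (\<alpha> h))
        - (\<Sum>j\<le>p. a (real j) 1 * (- x) ^ j * ln (- x)))
      \<in> o[outside_sector c \<theta>](\<lambda>x. (- x) powr complex_of_real (\<alpha> N))"
    using assms unfolding totally_regular_spectral_def by blast
  have Re: "c \<le> Re (S n)" for n using Re_ge_of_mem_sector[OF c(1,2)] c(3) by blast
  then have "c \<le> norm (S n)" for n using complex_Re_le_cmod order_trans by blast
  with c Re show ?thesis by (intro that[OF _ _ _ summable_inverse_power_genus[OF s'] remainder]) auto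
qed

lemma tendsto_zero_of_smallo_bounded:
  fixes f :: "'a \<Rightarrow> 'b :: real_normed_field"
  assumes "f \<in> o[F](g)" "eventually (\<lambda>x. norm (g x) \<le> 1) F"
  shows "(f \<longlongrightarrow> 0) F"
proof (rule tendstoI)
  fix e :: real assume "0 < e"
  have "eventually (\<lambda>x. norm (f x) \<le> e / 2 * norm (g x)) F"
    using landau_o.smallD[OF assms(1), of "e / 2"] \<open>0 < e\<close> by simp
  moreover note assms(2)
  ultimately show "eventually (\<lambda>x. dist (f x) 0 < e) F"
  proof eventually_elim
    case (elim x)
    then have "e / 2 * norm (g x) \<le> e / 2" using \<open>0 < e\<close> by (simp add: mult_left_le)
    then have "norm (f x) \<le> e / 2" using elim by linarith
    then show ?case using \<open>0 < e\<close> by simp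
  qed
qed

lemma logGamma_seq_remainder_tendsto_zero:
  assumes "0 < \<sigma>" "0 < c" "\<theta> < pi" "\<alpha> N \<le> 0"
    and remainder: "(\<lambda>x. logGamma_seq S (- x)
        - (\<Sum>h\<le>N. a (\<alpha> h) 0 * (- x) powr complex_of_real (\<alpha> h))
        - (\<Sum>j\<le>p. a (real j) 1 * (- x) ^ j * ln (- x)))
      \<in> o[outside_sector c \<theta>](\<lambda>x. (- x) powr complex_of_real (\<alpha> N))"
  shows "((\<lambda>t. logGamma_seq S (complex_of_real (\<sigma> * (1 + t)))
      - (\<Sum>h\<le>N. a (\<alpha> h) 0 * complex_of_real (\<sigma> * (1 + t)) powr complex_of_real (\<alpha> h))
      - (\<Sum>j\<le>p. a (real j) 1 * complex_of_real (\<sigma> * (1 + t)) ^ j * ln (complex_of_real (\<sigma> * (1 + t)))))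
    \<longlongrightarrow> 0) at_top"
proof (rule tendsto_zero_of_smallo_bounded)
  define W where "W t = complex_of_real (\<sigma> * (1 + t))" for t
  have "filterlim (\<lambda>t. - W t) (outside_sector c \<theta>) at_top"
    unfolding outside_sector_def filterlim_inf filterlim_principal
  proof
    have "filterlim (\<lambda>t. \<bar>\<sigma> * (1 + t)\<bar>) at_top at_top" using \<open>0 < \<sigma>\<close> by real_asymp
    then show "filterlim (\<lambda>t. - W t) at_infinity at_top"
      unfolding filterlim_at_infinity_conv_norm_at_top W_def norm_minus_cancel norm_of_real .
    show "eventually (\<lambda>t. - W t \<in> - sector c \<theta>) at_top"
      using eventually_gt_at_top[of 0]
    proof eventually_elim
      case (elim t)
      then have "0 < \<sigma> * (1 + t)" using \<open>0 < \<sigma>\<close> by simp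
      then show ?case using neg_of_real_notin_sector[OF assms(2,3)] unfolding W_def by blast
    qed
  qed
  from landau_o.small.compose[OF remainder this]
  show "(\<lambda>t. logGamma_seq S (W t)
      - (\<Sum>h\<le>N. a (\<alpha> h) 0 * W t powr complex_of_real (\<alpha> h))
      - (\<Sum>j\<le>p. a (real j) 1 * W t ^ j * ln (W t)))
    \<in> o[at_top](\<lambda>t. W t powr complex_of_real (\<alpha> N))"
    by simp
  show "eventually (\<lambda>t. norm (W t powr complex_of_real (\<alpha> N)) \<le> 1) at_top"
    using eventually_ge_at_top[of "1 / \<sigma>"]
  proof eventually_elim
    case (elim t)
    then have "1 \<le> \<sigma> * (1 + t)" using \<open>0 < \<sigma>\<close> by (simp add: field_simps)
    then have "(\<sigma> * (1 + t)) powr \<alpha> N \<le> (\<sigma> * (1 + t)) powr 0"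
      using \<open>\<alpha> N \<le> 0\<close> by (intro powr_mono) auto
    moreover have "\<sigma> * (1 + t) \<noteq> 0" using \<open>1 \<le> \<sigma> * (1 + t)\<close> by linarith
    ultimately have "(\<sigma> * (1 + t)) powr \<alpha> N \<le> 1" by simp
    moreover have "W t powr complex_of_real (\<alpha> N) = complex_of_real ((\<sigma> * (1 + t)) powr \<alpha> N)"
      unfolding W_def using \<open>1 \<le> \<sigma> * (1 + t)\<close> by (intro powr_of_real) simp
    ultimately show ?case by simp
  qed
qed

definition phi_tilde :: "complex \<Rightarrow> real \<Rightarrow> (nat \<Rightarrow> complex) \<Rightarrow> nat \<Rightarrow> complex \<Rightarrow> complex" where
  "phi_tilde a \<alpha> K p0 x = a * ((1 - x) powr complex_of_real \<alpha> - 1) - (\<Sum>k=1..p0. K k * (- x) ^ k)"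

definition phi_hat :: "complex \<Rightarrow> nat \<Rightarrow> (nat \<Rightarrow> complex) \<Rightarrow> nat \<Rightarrow> complex \<Rightarrow> complex" where
  "phi_hat a l K p0 x = a * (1 - x) ^ l * ln (1 - x) - (\<Sum>k=1..p0. K k * (- x) ^ k)"

lemma has_const_coeff_power_sum: "has_const_coeff (\<lambda>t. \<Sum>k=1..p0. K k * complex_of_real t ^ k) j 0"
proof -
  have "has_const_coeff (\<lambda>t. \<Sum>k\<in>{1..p0}. K k * complex_of_real t ^ k) j (\<Sum>k\<in>{1..p0}. K k * 0)"
    by (intro has_const_coeff_sum has_const_coeff_scale has_const_coeff_power) auto
  then show ?thesis by simp
qed

lemma phi_tilde_neg_of_real:
  "0 < t \<Longrightarrow> phi_tilde a \<alpha> K p0 (- complex_of_real t)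
    = a * (complex_of_real ((1 + t) powr \<alpha>) - 1) - (\<Sum>k=1..p0. K k * complex_of_real t ^ k)"
  unfolding phi_tilde_def by (simp add: powr_of_real[symmetric] add.commute)

lemma phi_hat_neg_of_real:
  "0 < t \<Longrightarrow> phi_hat a l K p0 (- complex_of_real t)
    = a * complex_of_real ((1 + t) ^ l * ln (1 + t)) - (\<Sum>k=1..p0. K k * complex_of_real t ^ k)"
  unfolding phi_hat_def by (simp add: Ln_of_real[symmetric] add.commute)

lemma has_const_coeff_phi_tilde:
  "has_const_coeff (\<lambda>t. phi_tilde a \<alpha> K p0 (- complex_of_real t)) j (const_coeff (phi_tilde a \<alpha> K p0) j)"
proof -
  obtain c where "has_expansion (\<lambda>t. complex_of_real ((1 + t) powr \<alpha>)) c"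
    using has_expansion_one_plus_powr by blast
  then have "has_const_coeff (\<lambda>t. a * (complex_of_real ((1 + t) powr \<alpha>) - 1)
      - (\<Sum>k=1..p0. K k * complex_of_real t ^ k)) j (a * (c 0 j - (if j = 0 then 1 else 0)) - 0)"
    by (intro has_const_coeff_diff has_const_coeff_scale has_const_coeff_const
        has_const_coeff_power_sum has_const_coeff_of_expansion)
  then have "has_const_coeff (\<lambda>t. phi_tilde a \<alpha> K p0 (- complex_of_real t)) j
      (a * (c 0 j - (if j = 0 then 1 else 0)) - 0)"
    by (rule has_const_coeff_eventually_eq)
       (use eventually_gt_at_top[of 0] in \<open>eventually_elim, simp add: phi_tilde_neg_of_real\<close>)
  then show ?thesis using const_coeff_eqI by metis
qed

lemma const_coeff_phi_tilde_neg:
  assumes "\<alpha> < 0"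
  shows "const_coeff (phi_tilde a \<alpha> K p0) j = - (if j = 0 then a else 0)"
proof -
  have "((\<lambda>t. (1 + t) powr \<alpha>) \<longlongrightarrow> 0) at_top" using assms by real_asymp
  then have "((\<lambda>t. complex_of_real ((1 + t) powr \<alpha>)) \<longlongrightarrow> complex_of_real 0) at_top"
    by (rule tendsto_of_real)
  then have "has_const_coeff (\<lambda>t. complex_of_real ((1 + t) powr \<alpha>)) j 0"
    by (intro has_const_coeff_tendsto_zero) simp
  then have "has_const_coeff (\<lambda>t. a * (complex_of_real ((1 + t) powr \<alpha>) - 1)
      - (\<Sum>k=1..p0. K k * complex_of_real t ^ k)) j (a * (0 - (if j = 0 then 1 else 0)) - 0)"
    by (intro has_const_coeff_diff has_const_coeff_scale has_const_coeff_const has_const_coeff_power_sum)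
  then have "has_const_coeff (\<lambda>t. phi_tilde a \<alpha> K p0 (- complex_of_real t)) j
      (a * (0 - (if j = 0 then 1 else 0)) - 0)"
    by (rule has_const_coeff_eventually_eq)
       (use eventually_gt_at_top[of 0] in \<open>eventually_elim, simp add: phi_tilde_neg_of_real\<close>)
  then show ?thesis by (auto dest: const_coeff_eqI)
qed

lemma has_const_coeff_phi_hat:
  "has_const_coeff (\<lambda>t. phi_hat a l K p0 (- complex_of_real t)) j (const_coeff (phi_hat a l K p0) j)"
proof -
  obtain c where "has_expansion (\<lambda>t. complex_of_real ((1 + t) ^ l * ln (1 + t))) c"
    using has_expansion_one_plus_power_mult_ln by blast
  then have "has_const_coeff (\<lambda>t. a * complex_of_real ((1 + t) ^ l * ln (1 + t))
      - (\<Sum>k=1..p0. K k * complex_of_real t ^ k)) j (a * c 0 j - 0)"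
    by (intro has_const_coeff_diff has_const_coeff_scale has_const_coeff_power_sum
        has_const_coeff_of_expansion)
  then have "has_const_coeff (\<lambda>t. phi_hat a l K p0 (- complex_of_real t)) j (a * c 0 j - 0)"
    by (rule has_const_coeff_eventually_eq)
       (use eventually_gt_at_top[of 0] in \<open>eventually_elim, simp add: phi_hat_neg_of_real\<close>)
  then show ?thesis using const_coeff_eqI by metis
qed

lemma powr_shift_eq_phi_tilde:
  assumes "0 < \<sigma>" "0 < t"
  shows "a * complex_of_real (\<sigma> * (1 + t)) powr complex_of_real \<alpha>
    = complex_of_real (\<sigma> powr \<alpha>) * (phi_tilde a \<alpha> K p0 (- complex_of_real t) + a
        + (\<Sum>k=1..p0. K k * complex_of_real t ^ k))"
proof -
  have "complex_of_real (\<sigma> * (1 + t)) powr complex_of_real \<alpha> = complex_of_real ((\<sigma> * (1 + t)) powr \<alpha>)"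
    using assms by (intro powr_of_real) simp
  also have "(\<sigma> * (1 + t)) powr \<alpha> = \<sigma> powr \<alpha> * (1 + t) powr \<alpha>"
    using assms by (simp add: powr_mult)
  finally show ?thesis
    unfolding phi_tilde_neg_of_real[OF \<open>0 < t\<close>] by (simp add: algebra_simps)
qed

lemma power_ln_shift_eq_phi_hat:
  assumes "0 < \<sigma>" "0 < t"
  shows "a * complex_of_real (\<sigma> * (1 + t)) ^ l * ln (complex_of_real (\<sigma> * (1 + t)))
    = complex_of_real (\<sigma> ^ l) * (phi_hat a l K p0 (- complex_of_real t)
        + (\<Sum>k=1..p0. K k * complex_of_real t ^ k)
        + a * complex_of_real (ln \<sigma>) * poly ([:1, 1:] ^ l) (complex_of_real t))"
proof -
  have "ln (complex_of_real (\<sigma> * (1 + t))) = complex_of_real (ln (\<sigma> * (1 + t)))"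
    using assms by (intro Ln_of_real) simp
  also have "ln (\<sigma> * (1 + t)) = ln \<sigma> + ln (1 + t)"
    using assms by (intro ln_mult_pos) auto
  finally have ln_eq: "ln (complex_of_real (\<sigma> * (1 + t))) = complex_of_real (ln \<sigma>) + complex_of_real (ln (1 + t))"
    by simp
  have poly_eq: "poly ([:1, 1:] ^ l) (complex_of_real t) = complex_of_real ((1 + t) ^ l)"
    by (simp add: poly_power)
  show ?thesis
    unfolding phi_hat_neg_of_real[OF \<open>0 < t\<close>] ln_eq poly_eq unfolding of_real_mult power_mult_distrib
    by (simp add: algebra_simps)
qed

lemma logGamma_seq_shift_expansion:
  fixes S :: "nat \<Rightarrow> complex" and Kt Kh :: "nat \<Rightarrow> nat \<Rightarrow> complex"
  assumes "totally_regular_spectral S s p \<alpha> N a" "\<alpha> N \<le> 0" "0 < \<sigma>"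
  obtains q R where "poly q 0 = 0" "(R \<longlongrightarrow> 0) at_top"
    "\<And>t. 0 < t \<Longrightarrow> logGamma_seq (\<lambda>n. (complex_of_real \<sigma> + S n) / complex_of_real \<sigma>) (complex_of_real t)
      = R t
        + (\<Sum>h\<le>N. complex_of_real (\<sigma> powr \<alpha> h) * (phi_tilde (a (\<alpha> h) 0) (\<alpha> h) (Kt h) d (- complex_of_real t)
            + a (\<alpha> h) 0 + (\<Sum>k=1..d. Kt h k * complex_of_real t ^ k)))
        + (\<Sum>j\<le>p. complex_of_real (\<sigma> ^ j) * (phi_hat (a (real j) 1) j (Kh j) d (- complex_of_real t)
            + (\<Sum>k=1..d. Kh j k * complex_of_real t ^ k)
            + a (real j) 1 * complex_of_real (ln \<sigma>) * poly ([:1, 1:] ^ j) (complex_of_real t)))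
        - logGamma_seq S (complex_of_real \<sigma>) - poly q (complex_of_real t)"
proof -
  obtain c \<theta> where "0 < c" "\<theta> < pi" and Re: "\<And>n. c \<le> Re (S n)"
    and summable: "summable (\<lambda>n. 1 / norm (S n) ^ Suc (genus S))"
    and remainder: "(\<lambda>x. logGamma_seq S (- x)
        - (\<Sum>h\<le>N. a (\<alpha> h) 0 * (- x) powr complex_of_real (\<alpha> h))
        - (\<Sum>j\<le>p. a (real j) 1 * (- x) ^ j * ln (- x)))
      \<in> o[outside_sector c \<theta>](\<lambda>x. (- x) powr complex_of_real (\<alpha> N))"
    by (rule totally_regular_spectralE[OF assms(1)]) blast
  obtain q where "poly q 0 = 0"
    and shift: "\<And>t. 0 \<le> t \<Longrightarrow> logGamma_seq (\<lambda>n. (complex_of_real \<sigma> + S n) / complex_of_real \<sigma>) (complex_of_real t)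
      = logGamma_seq S (complex_of_real (\<sigma> * (1 + t))) - logGamma_seq S (complex_of_real \<sigma>)
        - poly q (complex_of_real t)"
    using logGamma_seq_shift[OF \<open>0 < \<sigma>\<close> \<open>0 < c\<close> Re summable] by blast
  define R where "R t = logGamma_seq S (complex_of_real (\<sigma> * (1 + t)))
      - (\<Sum>h\<le>N. a (\<alpha> h) 0 * complex_of_real (\<sigma> * (1 + t)) powr complex_of_real (\<alpha> h))
      - (\<Sum>j\<le>p. a (real j) 1 * complex_of_real (\<sigma> * (1 + t)) ^ j * ln (complex_of_real (\<sigma> * (1 + t))))"
    for t
  show ?thesis
  proof (rule that[OF \<open>poly q 0 = 0\<close>])
    show "(R \<longlongrightarrow> 0) at_top"
      unfolding R_def using logGamma_seq_remainder_tendsto_zero[OF \<open>0 < \<sigma>\<close> \<open>0 < c\<close> \<open>\<theta> < pi\<close> assms(2) remainder] .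
  next
    fix t :: real assume "0 < t"
    then show "logGamma_seq (\<lambda>n. (complex_of_real \<sigma> + S n) / complex_of_real \<sigma>) (complex_of_real t)
      = R t
        + (\<Sum>h\<le>N. complex_of_real (\<sigma> powr \<alpha> h) * (phi_tilde (a (\<alpha> h) 0) (\<alpha> h) (Kt h) d (- complex_of_real t)
            + a (\<alpha> h) 0 + (\<Sum>k=1..d. Kt h k * complex_of_real t ^ k)))
        + (\<Sum>j\<le>p. complex_of_real (\<sigma> ^ j) * (phi_hat (a (real j) 1) j (Kh j) d (- complex_of_real t)
            + (\<Sum>k=1..d. Kh j k * complex_of_real t ^ k)
            + a (real j) 1 * complex_of_real (ln \<sigma>) * poly ([:1, 1:] ^ j) (complex_of_real t)))
        - logGamma_seq S (complex_of_real \<sigma>) - poly q (complex_of_real t)"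
      using shift[of t] powr_shift_eq_phi_tilde[OF \<open>0 < \<sigma>\<close> \<open>0 < t\<close>]
        power_ln_shift_eq_phi_hat[OF \<open>0 < \<sigma>\<close> \<open>0 < t\<close>]
      unfolding R_def by simp
  qed
qed

lemma const_coeff_logGamma_shift:
  fixes S :: "nat \<Rightarrow> complex" and Kt Kh :: "nat \<Rightarrow> nat \<Rightarrow> complex"
  assumes "totally_regular_spectral S s p \<alpha> N a" "\<alpha> N \<le> 0" "0 < \<sigma>"
  shows "const_coeff (\<lambda>x. logGamma_seq (\<lambda>n. (complex_of_real \<sigma> + S n) / complex_of_real \<sigma>) (- x)) k
    = (\<Sum>h\<le>N. complex_of_real (\<sigma> powr \<alpha> h) * (const_coeff (phi_tilde (a (\<alpha> h) 0) (\<alpha> h) (Kt h) d) k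
          + (if k = 0 then a (\<alpha> h) 0 else 0)))
      + (\<Sum>j\<le>p. complex_of_real (\<sigma> ^ j) * (const_coeff (phi_hat (a (real j) 1) j (Kh j) d) k
          + (if k = 0 then a (real j) 1 * complex_of_real (ln \<sigma>) else 0)))
      - (if k = 0 then logGamma_seq S (complex_of_real \<sigma>) else 0)"
proof -
  obtain q R where "poly q 0 = 0" and R: "(R \<longlongrightarrow> 0) at_top" and expansion:
    "\<And>t. 0 < t \<Longrightarrow> logGamma_seq (\<lambda>n. (complex_of_real \<sigma> + S n) / complex_of_real \<sigma>) (complex_of_real t)
      = R t
        + (\<Sum>h\<le>N. complex_of_real (\<sigma> powr \<alpha> h) * (phi_tilde (a (\<alpha> h) 0) (\<alpha> h) (Kt h) d (- complex_of_real t)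
            + a (\<alpha> h) 0 + (\<Sum>k=1..d. Kt h k * complex_of_real t ^ k)))
        + (\<Sum>j\<le>p. complex_of_real (\<sigma> ^ j) * (phi_hat (a (real j) 1) j (Kh j) d (- complex_of_real t)
            + (\<Sum>k=1..d. Kh j k * complex_of_real t ^ k)
            + a (real j) 1 * complex_of_real (ln \<sigma>) * poly ([:1, 1:] ^ j) (complex_of_real t)))
        - logGamma_seq S (complex_of_real \<sigma>) - poly q (complex_of_real t)"
    by (rule logGamma_seq_shift_expansion[OF assms, where Kt = Kt and Kh = Kh and d = d]) blast
  have "has_const_coeff (\<lambda>t. R t
        + (\<Sum>h\<le>N. complex_of_real (\<sigma> powr \<alpha> h) * (phi_tilde (a (\<alpha> h) 0) (\<alpha> h) (Kt h) d (- complex_of_real t)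
            + a (\<alpha> h) 0 + (\<Sum>k=1..d. Kt h k * complex_of_real t ^ k)))
        + (\<Sum>j\<le>p. complex_of_real (\<sigma> ^ j) * (phi_hat (a (real j) 1) j (Kh j) d (- complex_of_real t)
            + (\<Sum>k=1..d. Kh j k * complex_of_real t ^ k)
            + a (real j) 1 * complex_of_real (ln \<sigma>) * poly ([:1, 1:] ^ j) (complex_of_real t)))
        - logGamma_seq S (complex_of_real \<sigma>) - poly q (complex_of_real t)) k
      (0 + (\<Sum>h\<le>N. complex_of_real (\<sigma> powr \<alpha> h) * (const_coeff (phi_tilde (a (\<alpha> h) 0) (\<alpha> h) (Kt h) d) k
          + (if k = 0 then a (\<alpha> h) 0 else 0) + 0))
      + (\<Sum>j\<le>p. complex_of_real (\<sigma> ^ j) * (const_coeff (phi_hat (a (real j) 1) j (Kh j) d) k + 0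
          + a (real j) 1 * complex_of_real (ln \<sigma>) * (if k = 0 then poly ([:1, 1:] ^ j) 0 else 0)))
      - (if k = 0 then logGamma_seq S (complex_of_real \<sigma>) else 0) - (if k = 0 then poly q 0 else 0))"
      (is "has_const_coeff _ k ?V")
    using R
    by (intro has_const_coeff_diff has_const_coeff_add has_const_coeff_sum has_const_coeff_scale
        has_const_coeff_tendsto_zero has_const_coeff_phi_tilde has_const_coeff_phi_hat
        has_const_coeff_const has_const_coeff_poly has_const_coeff_power_sum finite_atMost)
  then have "has_const_coeff (\<lambda>t. logGamma_seq (\<lambda>n. (complex_of_real \<sigma> + S n) / complex_of_real \<sigma>)
      (- (- complex_of_real t))) k ?V"
    by (rule has_const_coeff_eventually_eq)
       (use eventually_gt_at_top[of 0] in \<open>eventually_elim, simp add: expansion\<close>)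
  then have "const_coeff (\<lambda>x. logGamma_seq (\<lambda>n. (complex_of_real \<sigma> + S n) / complex_of_real \<sigma>) (- x)) k = ?V"
    by (rule const_coeff_eqI)
  then show ?thesis using \<open>poly q 0 = 0\<close> by (cases "k = 0") (simp_all add: poly_power)
qed

text \<open>The summands \<open>h > l\<close> drop out: for \<open>\<alpha> h < 0\<close> the constant term of tilde-\<open>\<phi>\<^sub>h\<close> is
  \<open>- a (\<alpha> h) 0\<close>, which cancels the constant \<open>a (\<alpha> h) 0\<close> of the expansion.\<close>
lemma const_coeff_logGamma_shift_minus_decomposition:
  fixes S :: "nat \<Rightarrow> complex" and l :: nat and Kt Kh :: "nat \<Rightarrow> nat \<Rightarrow> complex"
  assumes "totally_regular_spectral S s p \<alpha> N a" "\<alpha> N \<le> 0" "0 < \<sigma>"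
    and "l \<le> N" and neg: "\<And>h. l < h \<Longrightarrow> h \<le> N \<Longrightarrow> \<alpha> h < 0"
  shows "const_coeff (\<lambda>x. logGamma_seq (\<lambda>n. (complex_of_real \<sigma> + S n) / complex_of_real \<sigma>) (- x)) k
      - ((\<Sum>h\<le>l. const_coeff (phi_tilde (a (\<alpha> h) 0) (\<alpha> h) (Kt h) d) k * complex_of_real (\<sigma> powr \<alpha> h))
        + (\<Sum>j\<le>p. const_coeff (phi_hat (a (real j) 1) j (Kh j) d) k * complex_of_real (\<sigma> ^ j)))
    = (if k = 0 then - logGamma_seq S (complex_of_real \<sigma>)
        + (\<Sum>j\<le>p. a (real j) 1 * complex_of_real (\<sigma> ^ j * ln \<sigma>))
        + (\<Sum>h\<le>l. a (\<alpha> h) 0 * complex_of_real (\<sigma> powr \<alpha> h)) else 0)"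
proof -
  define T where "T h = complex_of_real (\<sigma> powr \<alpha> h) * (const_coeff (phi_tilde (a (\<alpha> h) 0) (\<alpha> h) (Kt h) d) k
      + (if k = 0 then a (\<alpha> h) 0 else 0))" for h
  have "{..N} = {..l} \<union> {l<..N}" using \<open>l \<le> N\<close> by auto
  then have "(\<Sum>h\<le>N. T h) = (\<Sum>h\<in>{..l} \<union> {l<..N}. T h)" by simp
  also have "\<dots> = (\<Sum>h\<le>l. T h) + (\<Sum>h\<in>{l<..N}. T h)"
    by (rule sum.union_disjoint) auto
  also have "(\<Sum>h\<in>{l<..N}. T h) = 0"
    by (intro sum.neutral) (auto simp: T_def const_coeff_phi_tilde_neg neg)
  finally have "(\<Sum>h\<le>N. T h) = (\<Sum>h\<le>l. T h)" by simp
  then show ?thesis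
    unfolding const_coeff_logGamma_shift[OF assms(1-3), of k Kt d Kh, folded T_def]
    by (cases "k = 0") (simp_all add: T_def sum.distrib distrib_left mult_ac)
qed

theorem mainTheorem11:
  fixes S1 :: "nat \<Rightarrow> real" and S2 :: "nat \<Rightarrow> complex"
    and s1 s2 :: real and p1 p2 N1 N2 l0 :: nat
    and \<alpha>1 \<alpha>2 :: "nat \<Rightarrow> real" and a1 a2 :: "real \<Rightarrow> nat \<Rightarrow> complex"
    and K0 K2 :: "nat \<Rightarrow> nat \<Rightarrow> complex"
  assumes S1_pos: "\<forall>n. S1 n > 0"
    and S1_reg: "totally_regular_spectral (\<lambda>n. complex_of_real (S1 n)) s1 p1 \<alpha>1 N1 a1"
    and S2_reg: "totally_regular_spectral S2 s2 p2 \<alpha>2 N2 a2"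
    and ord1: "\<alpha>1 N1 \<le> 0" and ord2: "\<alpha>2 N2 \<le> 0"
    and ord1_p2: "\<alpha>1 N1 < - real p2 - 1"
    and ord2_s1: "- \<alpha>2 N2 \<ge> s1"
    and ell: "l0 \<le> N2" "- \<alpha>2 l0 \<le> s1" "\<forall>h. l0 < h \<and> h \<le> N2 \<longrightarrow> s1 < - \<alpha>2 h"
  shows
    "let p0 = nat \<lfloor>s1 + s2\<rfloor>;
         St = (\<lambda>n1 n2. (complex_of_real (S1 n1) + S2 n2) / complex_of_real (S1 n1));
         a0 = (\<lambda>k n1. const_coeff (\<lambda>x. logGamma_seq (St n1) (- x)) k);
         \<phi>t = (\<lambda>h x. a2 (\<alpha>2 h) 0 * ((1 - x) powr complex_of_real (\<alpha>2 h) - 1)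
                    - (\<Sum>k=1..p0. K0 k h * (- x) ^ k));
         \<phi>h = (\<lambda>l x. a2 (real l) 1 * (1 - x) ^ l * ln (1 - x)
                    - (\<Sum>k=1..p0. K2 k l * (- x) ^ k));
         bsum = (\<lambda>k n1. (\<Sum>h\<le>l0. const_coeff (\<phi>t h) k * complex_of_real (S1 n1 powr \<alpha>2 h))
                      + (\<Sum>l\<le>p2. const_coeff (\<phi>h l) k * complex_of_real (S1 n1 ^ l)));
         A = (\<lambda>k s. \<Sum>n1. (a0 k n1 - bsum k n1) * complex_of_real (S1 n1) powr (- s))
     in (\<forall>s. A 1 s = 0) \<and>
        (\<forall>s. A 0 s =
           (\<Sum>n1. (- logGamma_seq S2 (complex_of_real (S1 n1))
                   + (\<Sum>j\<le>p2. a2 (real j) 1 * complex_of_real (S1 n1 ^ j * ln (S1 n1)))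
                   + (\<Sum>h\<le>l0. a2 (\<alpha>2 h) 0 * complex_of_real (S1 n1 powr \<alpha>2 h)))
                  * complex_of_real (S1 n1) powr (- s)))"
proof -
  have "0 \<le> s1" by (rule totally_regular_spectral_exponent_nonneg[OF S1_reg])
  then have "\<alpha>2 h < 0" if "l0 < h" "h \<le> N2" for h using ell(3) that by force
  note per_term = const_coeff_logGamma_shift_minus_decomposition[OF S2_reg ord2 S1_pos[rule_format] ell(1) this,
      where Kt = "\<lambda>h k. K0 k h" and Kh = "\<lambda>l k. K2 k l" and d = "nat \<lfloor>s1 + s2\<rfloor>",
      unfolded phi_tilde_def phi_hat_def]
  show ?thesis unfolding Let_def using per_term[of _ 0] per_term[of _ 1] by simp
qed

end
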